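(* Let $y_0:A\to\Delta(B)$ satisfy $U^1(\mu_0,y_0)>U^1(\mu,y_0)$ for every $\mu\in\mathcal{M}\setminus\{\mu_0\}$ and $U^2(\mu_0,y_0)>v^2$; let $\bar y:A\to\Delta(B)$ satisfy $U^1(\mu_0,\bar y)\ge U^1(\mu,\bar y)$ for all $\mu\in\mathcal{M}$ and $U^2(\mu_0,\bar y)\ge v^2$; let $\varepsilon\in(0,1]$ and $y=\varepsilon y_0+(1-\varepsilon)\bar y$. For an integer $N\ge1$, let $\tau_0$ be the $N$-stage receiver strategy described in the context (built from $y$), and for $\delta\in(0,1)$ let $\sigma_0$ be any pure best reply of the sender to $\tau_0$ in the $N$-stage $\delta$-discounted game. Then for every $\eta>0$ there is $N_0$ such that for every $N\ge N_0$ there is $\delta_0<1$ such that for every $\delta\in[\delta_0,1)$ one has $\|\mu_{\sigma_0,\tau_0}-\mu_0\|_1<\eta$.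
   Context: Setting: finite state set $S$, message set $A=S$, finite receiver action set $B$, payoff $u=(u^1,u^2):S\times B\to\mathbb{R}^2$ (player 1 = sender, player 2 = receiver) extended linearly to mixed actions; an irreducible aperiodic Markov chain on $S$ with transition $p$ and invariant measure $m$; states $s_1,s_2,\dots$ follow the chain with $s_1\sim m$. At each stage $n$ the sender observes $s_n$ (and all past states, messages and actions) and announces $a_n\in A$; the receiver observes $a_n$ and picks $b_n\in B$, which is publicly observed. $\mathcal{M}$ is the set of distributions on $S\times A$ with both marginals equal to $m$; $\mu_0(s,s)=m(s)$, $\mu_0(s,a)=0$ for $s\neq a$; $U(\mu,y)=\sum_{s,a}\mu(s,a)u(s,y(\cdot\mid a))$; $v^2=\max_{b}\sum_s m(s)u^2(s,b)$. Construction of $\tau_0$: fix $N$ and let $m_N\in\Delta(S)$ be a distribution closest to $m$ among those with $Nm_N(s)\in\mathbb{Z}$ for all $s$. For $n\le N$ let $\mathbf{N}_n(s)=|\{k\le n:a_k=s\}|$ and $q=\min\{1\le n\le N:\mathbf{N}_n(a_n)>Nm_N(a_n)\}$ ($\min\emptyset=+\infty$). Let $(\theta_n)_{n=1}^N$ be $S$-valued with: $\theta_n=a_n$ for $n<q$; $|\{n\le N:\theta_n=s\}|=Nm_N(s)$ for each $s$; and $(\theta_q,\dots,\theta_N)$ is a fixed deterministic function of $(a_1,\dots,a_q)$. Under $\tau_0$, at each stage $n\le N$ the receiver plays $y(\cdot\mid\theta_n)$. The $N$-stage $\delta$-discounted game has sender payoff $\mathbf{E}[\sum_{n=1}^N(1-\delta)\delta^{n-1}u^1(s_n,b_n)]$.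 Finally $\mu_{\sigma_0,\tau_0}(s,a)=\mathbf{E}_{\sigma_0,\tau_0}\big[\frac1N\sum_{n=1}^N\mathbf{1}_{\{s_n=s,\theta_n=a\}}\big]$ for $(s,a)\in S\times A$. *)

theory Defs
  imports Complex_Main
begin

primrec pn :: "('s \<Rightarrow> 's \<Rightarrow> real) \<Rightarrow> nat \<Rightarrow> 's \<Rightarrow> 's \<Rightarrow> real" where
  "pn p 0 s t = (if s = t then 1 else 0)"
| "pn p (Suc n) s t = (\<Sum>r\<in>UNIV. pn p n s r * p r t)"

definition stochastic :: "('s::finite \<Rightarrow> 's \<Rightarrow> real) \<Rightarrow> bool" where
  "stochastic p \<longleftrightarrow> (\<forall>s t. 0 \<le> p s t) \<and> (\<forall>s. (\<Sum>t\<in>UNIV. p s t) = 1)"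

definition irreducible_chain :: "('s::finite \<Rightarrow> 's \<Rightarrow> real) \<Rightarrow> bool" where
  "irreducible_chain p \<longleftrightarrow> (\<forall>s t. \<exists>n>0. pn p n s t > 0)"

definition aperiodic_chain :: "('s::finite \<Rightarrow> 's \<Rightarrow> real) \<Rightarrow> bool" where
  "aperiodic_chain p \<longleftrightarrow> (\<forall>s. Gcd {n. n > 0 \<and> pn p n s s > 0} = (1::nat))"

definition distr :: "('a::finite \<Rightarrow> real) \<Rightarrow> bool" where
  "distr q \<longleftrightarrow> (\<forall>x. 0 \<le> q x) \<and> (\<Sum>x\<in>UNIV. q x) = 1"

definition invariant_measure :: "('s::finite \<Rightarrow> 's \<Rightarrow> real) \<Rightarrow> ('s \<Rightarrow> real) \<Rightarrow> bool" where
  "invariant_measure p m \<longleftrightarrow> distr m \<and> (\<forall>t. (\<Sum>s\<in>UNIV. m s * p s t) = m t)"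

text \<open>Behavioural map A -> Delta(B): y a b is the probability of b given message a.\<close>
definition cond_distr :: "('a::finite \<Rightarrow> 'b::finite \<Rightarrow> real) \<Rightarrow> bool" where
  "cond_distr y \<longleftrightarrow> (\<forall>a. distr (y a))"

definition Mset :: "('s::finite \<Rightarrow> real) \<Rightarrow> ('s \<Rightarrow> 's \<Rightarrow> real) set" where
  "Mset m = {\<mu>. (\<forall>s a. 0 \<le> \<mu> s a) \<and> (\<forall>s. (\<Sum>a\<in>UNIV. \<mu> s a) = m s)
                \<and> (\<forall>a. (\<Sum>s\<in>UNIV. \<mu> s a) = m a)}"

definition mu0 :: "('s \<Rightarrow> real) \<Rightarrow> 's \<Rightarrow> 's \<Rightarrow> real" where
  "mu0 m s a = (if s = a then m s else 0)"

text \<open>U(mu,y) for one coordinate u of the payoff, u extended linearly to mixed actions.\<close>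
definition Upay :: "('s::finite \<Rightarrow> 'b::finite \<Rightarrow> real) \<Rightarrow> ('s \<Rightarrow> 's \<Rightarrow> real) \<Rightarrow> ('s \<Rightarrow> 'b \<Rightarrow> real) \<Rightarrow> real" where
  "Upay u \<mu> y = (\<Sum>s\<in>UNIV. \<Sum>a\<in>UNIV. \<mu> s a * (\<Sum>b\<in>UNIV. y a b * u s b))"

definition v2 :: "('s::finite \<Rightarrow> real) \<Rightarrow> ('s \<Rightarrow> 'b::finite \<Rightarrow> real) \<Rightarrow> real" where
  "v2 m u2 = Max (range (\<lambda>b. \<Sum>s\<in>UNIV. m s * u2 s b))"

definition l1dist :: "('s::finite \<Rightarrow> 's \<Rightarrow> real) \<Rightarrow> ('s \<Rightarrow> 's \<Rightarrow> real) \<Rightarrow> real" where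
  "l1dist \<mu> \<nu> = (\<Sum>s\<in>UNIV. \<Sum>a\<in>UNIV. \<bar>\<mu> s a - \<nu> s a\<bar>)"

definition grid_distr :: "nat \<Rightarrow> ('s::finite \<Rightarrow> real) \<Rightarrow> bool" where
  "grid_distr N q \<longleftrightarrow> distr q \<and> (\<forall>s. \<exists>k::int. real N * q s = real_of_int k)"

definition closest_grid :: "nat \<Rightarrow> ('s::finite \<Rightarrow> real) \<Rightarrow> ('s \<Rightarrow> real) \<Rightarrow> bool" where
  "closest_grid N m q \<longleftrightarrow> grid_distr N q \<and>
     (\<forall>q'. grid_distr N q' \<longrightarrow> (\<Sum>s\<in>UNIV. \<bar>q s - m s\<bar>) \<le> (\<Sum>s\<in>UNIV. \<bar>q' s - m s\<bar>))"

text \<open>Messages a_1..a_N are the list as (as ! (n-1) = a_n). Stage n (1-based) violates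
  the quota if N_n(a_n) > N m_N(a_n).\<close>
definition viol :: "nat \<Rightarrow> ('s \<Rightarrow> real) \<Rightarrow> 's list \<Rightarrow> nat \<Rightarrow> bool" where
  "viol N mN as n \<longleftrightarrow> 1 \<le> n \<and> n \<le> N \<and>
     real (count_list (take n as) (as ! (n - 1))) > real N * mN (as ! (n - 1))"

text \<open>q, with N+1 standing for +infinity.\<close>
definition qidx :: "nat \<Rightarrow> ('s \<Rightarrow> real) \<Rightarrow> 's list \<Rightarrow> nat" where
  "qidx N mN as = (if \<exists>n. viol N mN as n then (LEAST n. viol N mN as n) else N + 1)"

text \<open>theta_n (n 1-based); c maps (a_1,...,a_q) to the list (theta_q,...,theta_N).\<close>
definition theta :: "nat \<Rightarrow> ('s \<Rightarrow> real) \<Rightarrow> ('s list \<Rightarrow> 's list) \<Rightarrow> 's list \<Rightarrow> nat \<Rightarrow> 's" where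
  "theta N mN c as n = (let q = qidx N mN as in
      if n < q then as ! (n - 1) else c (take q as) ! (n - q))"

definition admissible_completion :: "nat \<Rightarrow> ('s::finite \<Rightarrow> real) \<Rightarrow> ('s list \<Rightarrow> 's list) \<Rightarrow> bool" where
  "admissible_completion N mN c \<longleftrightarrow>
     (\<forall>as. length as = N \<and> qidx N mN as \<le> N \<longrightarrow>
        length (c (take (qidx N mN as) as)) = N - qidx N mN as + 1 \<and>
        (\<forall>s. real (card {n\<in>{1..N}. theta N mN c as n = s}) = real N * mN s))"

text \<open>A (behavioural) sender strategy: given the history of completed stages
  (state, message, action) and the current state, a distribution over messages.\<close>
type_synonym ('s, 'b) sstrat = "('s \<times> 's \<times> 'b) list \<Rightarrow> 's \<Rightarrow> 's \<Rightarrow> real"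

definition sender_strategy :: "('s::finite, 'b) sstrat \<Rightarrow> bool" where
  "sender_strategy \<sigma> \<longleftrightarrow> (\<forall>h s. distr (\<sigma> h s))"

definition pure_strategy :: "('s, 'b) sstrat \<Rightarrow> bool" where
  "pure_strategy \<sigma> \<longleftrightarrow> (\<exists>f. \<forall>h s a. \<sigma> h s a = (if a = f h s then 1 else 0))"

text \<open>Probability of a full play h = [(s_1,a_1,b_1),...,(s_N,a_N,b_N)] under (sigma, tau_0),
  where tau_0 plays y(.|theta_n) at stage n.\<close>
definition hprob :: "('s \<Rightarrow> 's \<Rightarrow> real) \<Rightarrow> ('s \<Rightarrow> real) \<Rightarrow> ('s \<Rightarrow> 'b \<Rightarrow> real) \<Rightarrow> nat
    \<Rightarrow> ('s \<Rightarrow> real) \<Rightarrow> ('s list \<Rightarrow> 's list) \<Rightarrow> ('s, 'b) sstrat \<Rightarrow> ('s \<times> 's \<times> 'b) list \<Rightarrow> real" where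
  "hprob p m y N mN c \<sigma> h =
     (let st = map fst h; ms = map (fst \<circ> snd) h; bs = map (snd \<circ> snd) h in
       m (st ! 0)
       * (\<Prod>k<N. \<sigma> (take k h) (st ! k) (ms ! k) * y (theta N mN c ms (Suc k)) (bs ! k))
       * (\<Prod>k<N - 1. p (st ! k) (st ! Suc k)))"

definition plays :: "nat \<Rightarrow> ('s \<times> 's \<times> 'b) list set" where
  "plays N = {h. length h = N}"

definition disc_payoff1 :: "('s \<Rightarrow> 's \<Rightarrow> real) \<Rightarrow> ('s \<Rightarrow> real) \<Rightarrow> ('s \<Rightarrow> 'b \<Rightarrow> real) \<Rightarrow> nat
    \<Rightarrow> ('s \<Rightarrow> real) \<Rightarrow> ('s list \<Rightarrow> 's list) \<Rightarrow> ('s \<Rightarrow> 'b \<Rightarrow> real) \<Rightarrow> real \<Rightarrow> ('s, 'b) sstrat \<Rightarrow> real" where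
  "disc_payoff1 p m y N mN c u1 \<delta> \<sigma> =
     (\<Sum>h\<in>plays N. hprob p m y N mN c \<sigma> h *
        (\<Sum>k<N. (1 - \<delta>) * \<delta> ^ k * u1 (fst (h ! k)) (snd (snd (h ! k)))))"

definition best_reply :: "('s::finite \<Rightarrow> 's \<Rightarrow> real) \<Rightarrow> ('s \<Rightarrow> real) \<Rightarrow> ('s \<Rightarrow> 'b \<Rightarrow> real) \<Rightarrow> nat
    \<Rightarrow> ('s \<Rightarrow> real) \<Rightarrow> ('s list \<Rightarrow> 's list) \<Rightarrow> ('s \<Rightarrow> 'b \<Rightarrow> real) \<Rightarrow> real \<Rightarrow> ('s, 'b) sstrat \<Rightarrow> bool" where
  "best_reply p m y N mN c u1 \<delta> \<sigma>0 \<longleftrightarrow> sender_strategy \<sigma>0 \<and>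
     (\<forall>\<sigma>. sender_strategy \<sigma> \<longrightarrow> disc_payoff1 p m y N mN c u1 \<delta> \<sigma> \<le> disc_payoff1 p m y N mN c u1 \<delta> \<sigma>0)"

definition mu_st :: "('s \<Rightarrow> 's \<Rightarrow> real) \<Rightarrow> ('s \<Rightarrow> real) \<Rightarrow> ('s \<Rightarrow> 'b \<Rightarrow> real) \<Rightarrow> nat
    \<Rightarrow> ('s \<Rightarrow> real) \<Rightarrow> ('s list \<Rightarrow> 's list) \<Rightarrow> ('s, 'b) sstrat \<Rightarrow> 's \<Rightarrow> 's \<Rightarrow> real" where
  "mu_st p m y N mN c \<sigma> s a =
     (\<Sum>h\<in>plays N. hprob p m y N mN c \<sigma> h *
        ((\<Sum>k<N. if fst (h ! k) = s \<and> theta N mN c (map (fst \<circ> snd) h) (Suc k) = a then 1 else 0) / real N))"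

end

theory Submission
  imports Defs "HOL-Analysis.Analysis"
begin

text \<open>
  Against the quota strategy the sender can tell the truth. The receiver then plays
  \<open>y(\<cdot> | s\<^sub>n)\<close> until some quota is exceeded; since the number of visits to each state
  concentrates around its mean (the Cesaro sums of \<open>p\<^sup>n - m\<close> are bounded, so the variance grows
  linearly), this happens only in the last few stages. Hence for large \<open>N\<close> truth-telling earns
  almost \<open>U\<^sup>1(\<mu>\<^sub>0, y)\<close>, and for \<open>\<delta>\<close> close to 1 a best reply \<open>\<sigma>\<^sub>0\<close> earns almost as much on
  average, i.e. \<open>U\<^sup>1(\<mu>\<^sub>\<sigma>\<^sub>0\<^sub>,\<^sub>\<tau>\<^sub>0, y) \<approx> U\<^sup>1(\<mu>\<^sub>0, y)\<close>. The frequency \<open>\<mu>\<^sub>\<sigma>\<^sub>0\<^sub>,\<^sub>\<tau>\<^sub>0\<close> has first marginal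
  \<open>m\<close> and second marginal \<open>m\<^sub>N \<approx> m\<close>, so it is close to \<open>\<M>\<close>, and on the compact set \<open>\<M>\<close> the
  payoff \<open>U\<^sup>1(\<cdot>, y)\<close> has \<open>\<mu>\<^sub>0\<close> as its strict maximiser; near-optimality thus forces
  \<open>\<mu>\<^sub>\<sigma>\<^sub>0\<^sub>,\<^sub>\<tau>\<^sub>0\<close> close to \<open>\<mu>\<^sub>0\<close>.
\<close>

lemma sum_delta_mult_left: "(\<Sum>r\<in>UNIV. (if s = r then 1 else 0) * (f r::real)) = f (s::'a::finite)"
proof -
  have "(\<Sum>r\<in>UNIV. (if s = r then 1 else 0) * f r) = (\<Sum>r\<in>UNIV. if s = r then f r else 0)"
    by (rule sum.cong) auto
  then show ?thesis by simp
qed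

lemma sum_delta_mult_right: "(\<Sum>r\<in>UNIV. (f r::real) * (if r = s then 1 else 0)) = f (s::'a::finite)"
proof -
  have "(\<Sum>r\<in>UNIV. f r * (if r = s then 1 else 0)) = (\<Sum>r\<in>UNIV. if s = r then f r else 0)"
    by (rule sum.cong) auto
  then show ?thesis by simp
qed

section \<open>The Markov chain\<close>

lemma pn_nonneg: "stochastic p \<Longrightarrow> 0 \<le> pn p n s t"
  by (induction n arbitrary: t) (auto simp: stochastic_def intro!: sum_nonneg)

lemma sum_pn_eq_1: "stochastic p \<Longrightarrow> (\<Sum>t\<in>UNIV. pn p n s t) = 1"
proof (induction n)
  case 0 then show ?case by simp
next
  case (Suc n)
  have "(\<Sum>t\<in>UNIV. pn p (Suc n) s t) = (\<Sum>r\<in>UNIV. pn p n s r * (\<Sum>t\<in>UNIV. p r t))"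
    by (simp add: sum_distrib_left sum_distrib_right, rule sum.swap)
  also have "\<dots> = 1" using Suc by (simp add: stochastic_def)
  finally show ?case .
qed

lemma pn_le_1: assumes "stochastic p" shows "pn p n s t \<le> 1"
proof -
  have "pn p n s t \<le> (\<Sum>t\<in>UNIV. pn p n s t)"
    by (rule member_le_sum) (auto intro: pn_nonneg[OF assms])
  then show ?thesis using sum_pn_eq_1[OF assms] by simp
qed

lemma invariant_pn:
  fixes w :: "'s::finite \<Rightarrow> real"
  assumes "\<And>t. (\<Sum>s\<in>UNIV. w s * p s t) = w t"
  shows "(\<Sum>s\<in>UNIV. w s * pn p n s t) = w t"
proof (induction n arbitrary: t)
  case 0 then show ?case by (simp add: sum_delta_mult_right)
next
  case (Suc n)
  have "(\<Sum>s\<in>UNIV. w s * pn p (Suc n) s t) = (\<Sum>r\<in>UNIV. (\<Sum>s\<in>UNIV. w s * pn p n s r) * p r t)"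
    by (simp add: sum_distrib_left sum_distrib_right mult.assoc, rule sum.swap)
  also have "\<dots> = w t" using Suc assms by simp
  finally show ?case .
qed

lemma invariant_measure_pos:
  assumes "stochastic p" "irreducible_chain p" "invariant_measure p m"
  shows "0 < m t"
proof -
  have d: "Defs.distr m" and inv: "\<And>t. (\<Sum>s\<in>UNIV. m s * p s t) = m t"
    using assms(3) by (auto simp: invariant_measure_def)
  have "\<exists>r. m r > 0"
  proof (rule ccontr)
    assume "\<nexists>r. m r > 0"
    then have "\<forall>r. m r = 0" using d by (meson Defs.distr_def antisym not_le)
    then show False using d by (simp add: Defs.distr_def)
  qed
  then obtain r where r: "m r > 0" by blast
  obtain n where "pn p n r t > 0" using assms(2) by (auto simp: irreducible_chain_def)
  then have "0 < m r * pn p n r t" using r by simp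
  also have "\<dots> \<le> (\<Sum>s\<in>UNIV. m s * pn p n s t)"
    by (rule member_le_sum[where f="\<lambda>s. m s * pn p n s t"])
       (use d pn_nonneg[OF assms(1)] in \<open>auto simp: Defs.distr_def\<close>)
  also have "\<dots> = m t" by (rule invariant_pn[OF inv])
  finally show ?thesis .
qed

text \<open>Uniqueness of the invariant measure, in its linear form: \<open>x - c m\<close> with \<open>c = min x/m\<close> is a
  nonnegative invariant vector vanishing somewhere, hence everywhere by irreducibility.\<close>

lemma invariant_zero_sum_eq_0:
  fixes x :: "'s::finite \<Rightarrow> real"
  assumes st: "stochastic p" and irr: "irreducible_chain p" and im: "invariant_measure p m"
    and xi: "\<And>t. (\<Sum>s\<in>UNIV. x s * p s t) = x t" and xs: "(\<Sum>s\<in>UNIV. x s) = 0"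
  shows "x = (\<lambda>_. 0)"
proof -
  have mp: "\<And>t. 0 < m t" using invariant_measure_pos[OF st irr im] .
  have d: "Defs.distr m" and inv: "\<And>t. (\<Sum>s\<in>UNIV. m s * p s t) = m t"
    using im by (auto simp: invariant_measure_def)
  define c where "c = Min (range (\<lambda>s. x s / m s))"
  have "c \<in> range (\<lambda>s. x s / m s)" unfolding c_def by (rule Min_in) auto
  then obtain s0 where s0: "c = x s0 / m s0" by auto
  have cle: "c \<le> x s / m s" for s unfolding c_def by (rule Min_le) auto
  define w where "w s = x s - c * m s" for s
  have wn: "0 \<le> w s" for s using cle[of s] mp[of s] by (simp add: w_def field_simps)
  have w0: "w s0 = 0" using s0 mp[of s0] by (simp add: w_def field_simps)
  have wi: "(\<Sum>s\<in>UNIV. w s * p s t) = w t" for t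
  proof -
    have "(\<Sum>s\<in>UNIV. w s * p s t) = (\<Sum>s\<in>UNIV. x s * p s t) - c * (\<Sum>s\<in>UNIV. m s * p s t)"
      by (simp add: w_def left_diff_distrib sum_subtractf sum_distrib_left mult.assoc)
    then show ?thesis using xi[of t] inv[of t] by (simp add: w_def)
  qed
  have wz: "w r = 0" for r
  proof -
    obtain n where "pn p n r s0 > 0" using irr by (auto simp: irreducible_chain_def)
    have "(\<Sum>s\<in>UNIV. w s * pn p n s s0) = 0" using invariant_pn[OF wi] w0 by simp
    then have "\<forall>s\<in>UNIV. w s * pn p n s s0 = 0"
      by (subst sum_nonneg_eq_0_iff[symmetric]) (auto intro: wn pn_nonneg[OF st] mult_nonneg_nonneg)
    then show ?thesis using \<open>pn p n r s0 > 0\<close> by auto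
  qed
  have "x s = c * m s" for s using wz[of s] by (simp add: w_def)
  then have "c = 0" using xs d by (simp add: Defs.distr_def sum_distrib_left[symmetric])
  then show ?thesis using \<open>\<And>s. x s = c * m s\<close> by auto
qed

definition deviation_operator :: "('s::finite \<Rightarrow> 's \<Rightarrow> real) \<Rightarrow> ('s \<Rightarrow> real) \<Rightarrow> real^'s \<Rightarrow> real^'s" where
  "deviation_operator p m x = (\<chi> t. (\<Sum>s\<in>UNIV. x$s * p s t) - x$t + (\<Sum>s\<in>UNIV. x$s) * m t)"

lemma linear_deviation_operator: "linear (deviation_operator p m)"
proof (rule linearI)
  show "deviation_operator p m (a + b) = deviation_operator p m a + deviation_operator p m b" for a b
    by (simp add: deviation_operator_def vec_eq_iff algebra_simps sum.distrib)
  show "deviation_operator p m (r *\<^sub>R b) = r *\<^sub>R deviation_operator p m b" for r b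
    by (simp add: deviation_operator_def vec_eq_iff algebra_simps sum_distrib_left)
qed

lemma inj_deviation_operator:
  assumes st: "stochastic p" and irr: "irreducible_chain p" and im: "invariant_measure p m"
  shows "inj (deviation_operator p m)"
  unfolding linear_inj_iff_eq_0[OF linear_deviation_operator]
proof (intro allI impI)
  fix x assume T0: "deviation_operator p m x = 0"
  have comp: "(\<Sum>s\<in>UNIV. x$s * p s t) - x$t + (\<Sum>s\<in>UNIV. x$s) * m t = 0" for t
    using T0 by (simp add: deviation_operator_def vec_eq_iff)
  have "(\<Sum>t\<in>UNIV. (\<Sum>s\<in>UNIV. x$s * p s t)) = (\<Sum>s\<in>UNIV. x$s * (\<Sum>t\<in>UNIV. p s t))"
    by (simp add: sum_distrib_left, rule sum.swap)
  also have "\<dots> = (\<Sum>s\<in>UNIV. x$s)" using st by (simp add: stochastic_def)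
  moreover have "(\<Sum>t\<in>UNIV. (\<Sum>s\<in>UNIV. x$s * p s t) - x$t + (\<Sum>s\<in>UNIV. x$s) * m t) = 0"
    using comp by simp
  ultimately have "(\<Sum>s\<in>UNIV. x$s) * (\<Sum>t\<in>UNIV. m t) = 0"
    by (simp add: sum.distrib sum_subtractf sum_distrib_left)
  then have xs: "(\<Sum>s\<in>UNIV. x$s) = 0" using im by (simp add: invariant_measure_def Defs.distr_def)
  have "(\<lambda>s. x$s) = (\<lambda>_. 0)"
    by (rule invariant_zero_sum_eq_0[OF st irr im]) (use comp xs in auto)
  then show "x = 0" by (simp add: vec_eq_iff fun_eq_iff)
qed

lemma deviation_operator_partial_sums:
  assumes st: "stochastic p" and im: "invariant_measure p m"
  shows "deviation_operator p m (\<chi> t. \<Sum>d<n. pn p d s t - m t) $ t = pn p n s t - pn p 0 s t"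
proof -
  have inv: "\<And>t. (\<Sum>r\<in>UNIV. m r * p r t) = m t" and m1: "(\<Sum>r\<in>UNIV. m r) = 1"
    using im by (auto simp: invariant_measure_def Defs.distr_def)
  have "(\<Sum>r\<in>UNIV. (\<Sum>d<n. pn p d s r - m r) * p r t)
      = (\<Sum>d<n. \<Sum>r\<in>UNIV. pn p d s r * p r t - m r * p r t)"
    by (simp add: sum_distrib_right left_diff_distrib) (rule sum.swap)
  also have "\<dots> = (\<Sum>d<n. pn p (Suc d) s t - m t)" using inv by (simp add: sum_subtractf)
  finally have a: "(\<Sum>r\<in>UNIV. (\<Sum>d<n. pn p d s r - m r) * p r t) = (\<Sum>d<n. pn p (Suc d) s t - m t)" .
  have "(\<Sum>r\<in>UNIV. \<Sum>d<n. pn p d s r - m r) = (\<Sum>d<n. \<Sum>r\<in>UNIV. pn p d s r - m r)"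
    by (rule sum.swap)
  also have "\<dots> = 0" using sum_pn_eq_1[OF st] m1 by (simp add: sum_subtractf)
  finally have b: "(\<Sum>r\<in>UNIV. \<Sum>d<n. pn p d s r - m r) = 0" .
  have "deviation_operator p m (\<chi> t. \<Sum>d<n. pn p d s t - m t) $ t
      = (\<Sum>d<n. pn p (Suc d) s t - pn p d s t)"
    using a b by (simp add: deviation_operator_def sum_subtractf)
  also have "\<dots> = pn p n s t - pn p 0 s t" by (rule sum_lessThan_telescope)
  finally show ?thesis .
qed

text \<open>The deviation operator is an injective linear map of a finite-dimensional space, hence bounded
  below, and it telescopes the Cesaro sums of \<open>p\<^sup>d - m\<close> to a difference of two stochastic rows.\<close>

lemma pn_partial_sums_deviation_bounded:
  fixes p :: "'s::finite \<Rightarrow> 's \<Rightarrow> real"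
  assumes st: "stochastic p" and irr: "irreducible_chain p" and im: "invariant_measure p m"
  shows "\<exists>C. \<forall>n s t. \<bar>\<Sum>d<n. pn p d s t - m t\<bar> \<le> C"
proof -
  obtain B where B: "B > 0" "\<And>x. B * norm x \<le> norm (deviation_operator p m x)"
    using linear_inj_bounded_below_pos[OF linear_deviation_operator inj_deviation_operator[OF assms]]
    by blast
  have "\<bar>\<Sum>d<n. pn p d s t - m t\<bar> \<le> real CARD('s) / B" for n s t
  proof -
    define x :: "real^'s" where "x = (\<chi> t. \<Sum>d<n. pn p d s t - m t)"
    have "\<bar>deviation_operator p m x $ t'\<bar> \<le> 1" for t'
      using deviation_operator_partial_sums[OF st im, where n=n and s=s and t=t'] pn_nonneg[OF st, of n s t']
        pn_le_1[OF st, of n s t'] pn_nonneg[OF st, of 0 s t'] pn_le_1[OF st, of 0 s t']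
      by (simp add: x_def abs_le_iff)
    then have "norm (deviation_operator p m x) \<le> real CARD('s)"
      using norm_le_l1_cart[of "deviation_operator p m x"]
        sum_bounded_above[of UNIV "\<lambda>i. \<bar>deviation_operator p m x $ i\<bar>" 1] by simp
    then have "B * norm x \<le> real CARD('s)" using B(2)[of x] by simp
    then have "norm x \<le> real CARD('s) / B" using B(1) by (simp add: field_simps)
    moreover have "\<bar>x $ t\<bar> \<le> norm x" by (rule component_le_norm_cart)
    ultimately show ?thesis by (simp add: x_def)
  qed
  then show ?thesis by blast
qed

section \<open>The quota strategy\<close>

lemma viol_cong_take:
  assumes "take n as = take n bs" "j \<le> n" "n \<le> length as" "n \<le> length bs"
  shows "viol N mN as j = viol N mN bs j"
proof -
  have t: "take j as = take j bs" using assms(1,2) by (metis min.absorb1 take_take)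
  have "j \<ge> 1 \<Longrightarrow> as ! (j - 1) = bs ! (j - 1)"
    using assms by (metis diff_less less_le_trans nth_take zero_less_one le_less_trans less_le)
  then show ?thesis unfolding viol_def using t by auto
qed

lemma theta_cong_take:
  assumes "take n as = take n bs" "1 \<le> n" "n \<le> N" "n \<le> length as" "n \<le> length bs"
  shows "theta N mN c as n = theta N mN c bs n"
proof (cases "\<exists>j\<le>n. viol N mN as j")
  case True
  then obtain j where j: "j \<le> n" "viol N mN as j" by blast
  define q where "q = (LEAST i. viol N mN as i)"
  have vq: "viol N mN as q" unfolding q_def by (rule LeastI) (rule j(2))
  have qj: "q \<le> j" unfolding q_def by (rule Least_le) (rule j(2))
  have nb: "\<not> viol N mN as i" if "i < q" for i using that unfolding q_def by (rule not_less_Least)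
  have ag: "viol N mN as i = viol N mN bs i" if "i \<le> n" for i
    using viol_cong_take[OF assms(1) that assms(4,5)] .
  have q2: "(LEAST i. viol N mN bs i) = q"
  proof (rule Least_equality)
    show "viol N mN bs q" using vq ag[of q] qj j(1) by simp
    show "q \<le> i" if "viol N mN bs i" for i
    proof (rule ccontr)
      assume "\<not> q \<le> i" then have "i < q" by simp
      then show False using nb[of i] ag[of i] that qj j(1) by simp
    qed
  qed
  have qa: "qidx N mN as = q" using j(2) by (auto simp: qidx_def q_def)
  have qb: "qidx N mN bs = q" using q2 vq ag[of q] qj j(1) by (auto simp: qidx_def)
  have tq: "take q as = take q bs" using assms(1) qj j(1) by (metis min.absorb1 take_take le_trans)
  show ?thesis unfolding theta_def Let_def qa qb tq using qj j(1) by simp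
next
  case False
  have ag: "viol N mN as i = viol N mN bs i" if "i \<le> n" for i
    using viol_cong_take[OF assms(1) that assms(4,5)] .
  have gt: "n < qidx N mN xs" if "\<forall>j\<le>n. \<not> viol N mN xs j" for xs
  proof (cases "\<exists>i. viol N mN xs i")
    case True
    then have "viol N mN xs (LEAST i. viol N mN xs i)" by (rule LeastI_ex)
    then have "n < (LEAST i. viol N mN xs i)" using that by (meson not_less)
    then show ?thesis using True by (simp add: qidx_def)
  next
    case False then show ?thesis using assms(3) by (simp add: qidx_def)
  qed
  have a: "n < qidx N mN as" using False by (intro gt) auto
  have b: "n < qidx N mN bs" using False ag by (intro gt) auto
  have "as ! (n - 1) = bs ! (n - 1)"
    using assms by (metis diff_less le_less_trans nth_take zero_less_one less_le_trans)
  then show ?thesis unfolding theta_def Let_def using a b by simp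
qed

lemma theta_append:
  assumes "1 \<le> n" "n \<le> N" "n \<le> length as"
  shows "theta N mN c (as @ [a]) n = theta N mN c as n"
  using assms by (intro theta_cong_take[where n=n]) auto

lemma theta_take:
  assumes "1 \<le> n" "n \<le> N" "n \<le> length as"
  shows "theta N mN c (take n as) n = theta N mN c as n"
  using assms by (intro theta_cong_take[where n=n]) auto

lemma count_list_take_eq_sum:
  "n \<le> length as \<Longrightarrow> real (count_list (take n as) s) = (\<Sum>k<n. if as ! k = s then 1 else 0)"
proof (induction n)
  case 0 then show ?case by simp
next
  case (Suc n)
  then have "take (Suc n) as = take n as @ [as ! n]" by (simp add: take_Suc_conv_app_nth)
  then show ?case using Suc by simp
qed

lemma card_theta_eq_sum:
  "real (card {n\<in>{1..N}. theta N mN c as n = s}) = (\<Sum>k<N. if theta N mN c as (Suc k) = s then 1 else 0)"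
proof -
  have "real (card {n\<in>{1..N}. theta N mN c as n = s}) = (\<Sum>n\<in>{1..N}. if theta N mN c as n = s then 1 else 0)"
    by (simp add: sum.inter_filter[symmetric])
  also have "\<dots> = (\<Sum>k<N. if theta N mN c as (Suc k) = s then 1 else 0)"
    using sum.atLeast1_atMost_eq[of "\<lambda>n. if theta N mN c as n = s then 1 else (0::real)" N] by simp
  finally show ?thesis .
qed

lemma sum_theta_indicator:
  fixes mN :: "'s::finite \<Rightarrow> real"
  assumes len: "length as = N" and N1: "1 \<le> N" and adm: "admissible_completion N mN c"
    and md: "Defs.distr mN"
  shows "(\<Sum>k<N. if theta N mN c as (Suc k) = s then 1 else 0) = real N * mN s"
proof (cases "qidx N mN as \<le> N")
  case True
  then show ?thesis using adm len card_theta_eq_sum[of N mN c as s]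
    by (simp add: admissible_completion_def)
next
  case False
  txt \<open>Without a violation no count exceeds its quota, and counts and quotas both sum to \<open>N\<close>.\<close>
  have nv: "\<not> viol N mN as n" for n
  proof
    assume v: "viol N mN as n"
    then have "(LEAST i. viol N mN as i) \<le> n" by (rule Least_le)
    moreover have "n \<le> N" using v by (simp add: viol_def)
    moreover have "qidx N mN as = (LEAST i. viol N mN as i)" using v unfolding qidx_def by auto
    ultimately show False using False by linarith
  qed
  then have q: "qidx N mN as = N + 1" by (simp add: qidx_def)
  have th: "theta N mN c as (Suc k) = as ! k" if "k < N" for k
    using that q by (simp add: theta_def)
  have cnt: "(\<Sum>k<N. if theta N mN c as (Suc k) = s' then 1 else 0) = real (count_list as s')" for s'
    using count_list_take_eq_sum[of N as s'] len th by simp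
  have bound: "\<forall>s'. real (count_list (take n as) s') \<le> real N * mN s'" if "n \<le> N" for n
    using that
  proof (induction n)
    case 0 then show ?case using md by (simp add: Defs.distr_def)
  next
    case (Suc n)
    then have tk: "take (Suc n) as = take n as @ [as ! n]" using len by (simp add: take_Suc_conv_app_nth)
    have "\<not> viol N mN as (Suc n)" by (rule nv)
    then have "real (count_list (take (Suc n) as) (as ! n)) \<le> real N * mN (as ! n)"
      using Suc(2) by (simp add: viol_def)
    then show ?case using Suc tk by auto
  qed
  have le: "real (count_list as s') \<le> real N * mN s'" for s'
    using bound[of N] len by simp
  have "(\<Sum>s'\<in>UNIV. real N * mN s' - real (count_list as s')) = real N * (\<Sum>s'\<in>UNIV. mN s') - real (\<Sum>s'\<in>UNIV. count_list as s')"
    by (simp add: sum_subtractf sum_distrib_left)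
  also have "\<dots> = 0" using md len sum_count_set[of as UNIV] by (simp add: Defs.distr_def)
  finally have "\<forall>s'\<in>UNIV. real N * mN s' - real (count_list as s') = 0"
    by (subst sum_nonneg_eq_0_iff[symmetric]) (auto intro: le)
  then show ?thesis using cnt[of s] by simp
qed

lemma count_list_take_mono: "i \<le> n \<Longrightarrow> count_list (take i as) s \<le> count_list (take n as) s"
proof -
  assume "i \<le> n"
  then have "take n as = take i as @ take (n - i) (drop i as)"
    by (metis le_add_diff_inverse take_add)
  then show ?thesis by (metis count_list_append le_add1)
qed

definition exceeds_quota :: "nat \<Rightarrow> ('s \<Rightarrow> real) \<Rightarrow> 's list \<Rightarrow> 's \<Rightarrow> bool" where
  "exceeds_quota N mN as s \<longleftrightarrow> real N * mN s < real (count_list as s)"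

lemma theta_mismatch_imp_quota_exceeded:
  assumes len: "length as = N" and k: "k < N" and n0: "n0 \<le> N"
    and mis: "theta N mN c as (Suc k) \<noteq> as ! k"
  shows "n0 \<le> k \<or> (\<exists>s. exceeds_quota N mN (take n0 as) s)"
proof (rule ccontr)
  assume "\<not> ?thesis"
  then have kn: "k < n0" and nc: "\<And>s. \<not> exceeds_quota N mN (take n0 as) s" by auto
  have "\<not> Suc k < qidx N mN as" using mis by (auto simp: theta_def Let_def)
  then have qle: "qidx N mN as \<le> Suc k" by simp
  then have ex: "\<exists>i. viol N mN as i" using k by (auto simp: qidx_def split: if_splits)
  then have qd: "qidx N mN as = (LEAST i. viol N mN as i)" by (simp add: qidx_def)
  have v: "viol N mN as (qidx N mN as)" unfolding qd by (rule LeastI_ex[OF ex])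
  let ?q = "qidx N mN as"
  have "real N * mN (as ! (?q - 1)) < real (count_list (take ?q as) (as ! (?q - 1)))"
    using v by (simp add: viol_def)
  also have "\<dots> \<le> real (count_list (take n0 as) (as ! (?q - 1)))"
    using qle kn by (simp add: count_list_take_mono)
  finally show False using nc by (simp add: exceeds_quota_def)
qed

lemma sum_indicator_ge: "(\<Sum>k<N. if n0 \<le> k then 1 else 0) = real (N - n0)"
proof -
  have "(\<Sum>k<N. if n0 \<le> k then 1 else (0::real)) = real (card {k\<in>{..<N}. n0 \<le> k})"
    by (simp add: sum.inter_filter[symmetric])
  also have "{k\<in>{..<N}. n0 \<le> k} = {n0..<N}" by auto
  finally show ?thesis by simp
qed

text \<open>Truth-telling only loses at stages after \<open>n\<^sub>0\<close>, or at any stage if some quota is already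
  exceeded within the first \<open>n\<^sub>0\<close> stages.\<close>

lemma truthful_loss_le:
  fixes f :: "'s::finite \<Rightarrow> 's \<Rightarrow> real"
  assumes len: "length as = N" and n0: "n0 \<le> N" and fb: "\<And>s a. \<bar>f s a\<bar> \<le> M"
  shows "(\<Sum>k<N. f (as ! k) (as ! k) - f (as ! k) (theta N mN c as (Suc k)))
    \<le> 2 * M * (real (N - n0) + real N * (\<Sum>s\<in>UNIV. if exceeds_quota N mN (take n0 as) s then 1 else 0))"
proof -
  let ?E = "\<Sum>s\<in>UNIV. if exceeds_quota N mN (take n0 as) s then 1 else (0::real)"
  have M0: "0 \<le> M" using fb[of undefined undefined] by simp
  have E0: "0 \<le> ?E" by (intro sum_nonneg) auto
  have stage: "f (as ! k) (as ! k) - f (as ! k) (theta N mN c as (Suc k))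
      \<le> 2 * M * ((if n0 \<le> k then 1 else 0) + ?E)" if k: "k < N" for k
  proof (cases "theta N mN c as (Suc k) = as ! k")
    case True
    then show ?thesis using M0 E0 by simp
  next
    case mis: False
    have "1 \<le> (if n0 \<le> k then 1 else 0) + ?E"
    proof (cases "n0 \<le> k")
      case True
      then show ?thesis using E0 by simp
    next
      case False
      then obtain s where "exceeds_quota N mN (take n0 as) s"
        using theta_mismatch_imp_quota_exceeded[OF len k n0 mis] by auto
      then have "1 \<le> ?E"
        using member_le_sum[of s UNIV "\<lambda>s. if exceeds_quota N mN (take n0 as) s then 1 else (0::real)"]
        by auto
      then show ?thesis by simp
    qed
    then have "2 * M \<le> 2 * M * ((if n0 \<le> k then 1 else 0) + ?E)"
      using mult_left_mono[of 1 _ "2 * M"] M0 by simp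
    moreover have "f (as ! k) (as ! k) - f (as ! k) (theta N mN c as (Suc k)) \<le> 2 * M"
      using fb[of "as ! k" "as ! k"] fb[of "as ! k" "theta N mN c as (Suc k)"] by (simp add: abs_le_iff)
    ultimately show ?thesis by linarith
  qed
  have "(\<Sum>k<N. f (as ! k) (as ! k) - f (as ! k) (theta N mN c as (Suc k)))
      \<le> (\<Sum>k<N. 2 * M * ((if n0 \<le> k then 1 else 0) + ?E))"
    by (intro sum_mono stage) simp
  also have "\<dots> = 2 * M * (real (N - n0) + real N * ?E)"
    by (simp add: sum_distrib_left[symmetric] sum.distrib sum_indicator_ge)
  finally show ?thesis .
qed

text \<open>Round every \<open>N m(s)\<close> down and give the at most \<open>|S|\<close> missing units to a single state.\<close>

lemma exists_grid_distr_close: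
  fixes m :: "'s::finite \<Rightarrow> real"
  assumes md: "Defs.distr m" and N1: "1 \<le> N"
  shows "\<exists>q. grid_distr N q \<and> (\<Sum>s\<in>UNIV. \<bar>q s - m s\<bar>) \<le> 2 * real CARD('s) / real N"
proof -
  obtain s0 :: 's where True by blast
  define f where "f s = \<lfloor>real N * m s\<rfloor>" for s
  define R where "R = int N - (\<Sum>s\<in>UNIV. f s)"
  define q where "q s = (real_of_int (f s) + (if s = s0 then real_of_int R else 0)) / real N" for s
  have Npos: "0 < real N" using N1 by simp
  have fle: "real_of_int (f s) \<le> real N * m s" for s unfolding f_def by simp
  have fge: "real N * m s - 1 < real_of_int (f s)" for s unfolding f_def by linarith
  have sm: "(\<Sum>s\<in>UNIV. real N * m s) = real N" using md by (simp add: Defs.distr_def sum_distrib_left[symmetric])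
  have R0: "0 \<le> real_of_int R"
  proof -
    have "(\<Sum>s\<in>UNIV. real_of_int (f s)) \<le> (\<Sum>s\<in>UNIV. real N * m s)" by (rule sum_mono) (rule fle)
    then show ?thesis using sm by (simp add: R_def)
  qed
  have RC: "real_of_int R \<le> real CARD('s)"
  proof -
    have "(\<Sum>s\<in>UNIV. real N * m s - 1) \<le> (\<Sum>s\<in>UNIV. real_of_int (f s))"
      by (rule sum_mono) (use fge in \<open>simp add: less_imp_le\<close>)
    then show ?thesis using sm by (simp add: R_def sum_subtractf)
  qed
  have f0: "0 \<le> f s" for s using md unfolding f_def Defs.distr_def by simp
  have "grid_distr N q"
    unfolding grid_distr_def Defs.distr_def
  proof (intro conjI allI)
    show "0 \<le> q s" for s using f0[of s] R0 Npos by (simp add: q_def)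
    have "(\<Sum>s\<in>UNIV. q s) = ((\<Sum>s\<in>UNIV. real_of_int (f s)) + real_of_int R) / real N"
      by (simp add: q_def sum_divide_distrib[symmetric] sum.distrib)
    also have "\<dots> = 1" using Npos by (simp add: R_def)
    finally show "(\<Sum>s\<in>UNIV. q s) = 1" .
    show "\<exists>k. real N * q s = real_of_int k" for s
      using Npos by (intro exI[of _ "f s + (if s = s0 then R else 0)"]) (simp add: q_def)
  qed
  moreover have "(\<Sum>s\<in>UNIV. \<bar>q s - m s\<bar>) \<le> 2 * real CARD('s) / real N"
  proof -
    have "\<bar>q s - m s\<bar> \<le> 1 / real N + (if s = s0 then real_of_int R / real N else 0)" for s
    proof -
      have "q s - m s = (real_of_int (f s) - real N * m s) / real N + (if s = s0 then real_of_int R / real N else 0)"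
        using Npos by (simp add: q_def field_simps)
      moreover have "\<bar>(real_of_int (f s) - real N * m s) / real N\<bar> \<le> 1 / real N"
        using fle[of s] fge[of s] Npos by (simp add: abs_le_iff divide_le_cancel field_simps)
      ultimately show ?thesis using R0 Npos by (smt (verit) divide_nonneg_nonneg)
    qed
    then have "(\<Sum>s\<in>UNIV. \<bar>q s - m s\<bar>) \<le> (\<Sum>s\<in>UNIV. 1 / real N + (if s = s0 then real_of_int R / real N else 0))"
      by (rule sum_mono)
    also have "\<dots> = real CARD('s) / real N + real_of_int R / real N" by (simp add: sum.distrib)
    also have "\<dots> \<le> 2 * real CARD('s) / real N" using RC Npos by (simp add: field_simps)
    finally show ?thesis .
  qed
  ultimately show ?thesis by blast
qed

lemma closest_grid_bound:
  fixes m :: "'s::finite \<Rightarrow> real"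
  assumes "Defs.distr m" "1 \<le> N" "closest_grid N m q"
  shows "(\<Sum>s\<in>UNIV. \<bar>q s - m s\<bar>) \<le> 2 * real CARD('s) / real N"
  using exists_grid_distr_close[OF assms(1,2)] assms(3) unfolding closest_grid_def by (meson order_trans)

lemma quota_slack:
  fixes q x \<gamma> K n n0 :: real
  assumes "\<bar>q - x\<bar> \<le> 2 * K / n" "n0 \<le> (1 - \<gamma>) * n" "4 * K \<le> \<gamma> * n * x" "0 < n" "0 \<le> x"
  shows "\<gamma> * n * x / 2 \<le> n * q - n0 * x"
proof -
  have "n * x - 2 * K \<le> n * q" using assms(1,4) by (simp add: abs_le_iff field_simps)
  moreover have "n0 * x \<le> (1 - \<gamma>) * n * x" using assms(2,5) by (simp add: mult_right_mono)
  ultimately show ?thesis using assms(3) by (simp add: algebra_simps)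
qed

definition truthful :: "('s, 'b) sstrat" where
  "truthful h s a = (if a = s then 1 else 0)"

lemma truthful_strategy: "sender_strategy (truthful :: ('s::finite, 'b) sstrat)"
  unfolding sender_strategy_def Defs.distr_def truthful_def by (simp add: sum.delta)

section \<open>Payoffs of frequency distributions\<close>

definition mixed_payoff :: "('s \<Rightarrow> 'b::finite \<Rightarrow> real) \<Rightarrow> ('s \<Rightarrow> 'b \<Rightarrow> real) \<Rightarrow> 's \<Rightarrow> 's \<Rightarrow> real" where
  "mixed_payoff y u s a = (\<Sum>b\<in>UNIV. y a b * u s b)"

lemma Upay_eq_mixed_payoff: "Upay u \<mu> y = (\<Sum>s\<in>UNIV. \<Sum>a\<in>UNIV. \<mu> s a * mixed_payoff y u s a)"
  by (simp add: Upay_def mixed_payoff_def)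

lemma Upay_mu0: "Upay u (mu0 m) y = (\<Sum>s\<in>UNIV. m s * mixed_payoff y u s s)"
proof -
  have "Upay u (mu0 m) y = (\<Sum>s\<in>UNIV. \<Sum>a\<in>UNIV. (if s = a then m s * mixed_payoff y u s a else 0))"
    unfolding Upay_eq_mixed_payoff mu0_def by (intro sum.cong refl) auto
  then show ?thesis by simp
qed

lemma mixed_payoff_bound:
  assumes "cond_distr y" "\<And>s b. \<bar>u s b\<bar> \<le> M"
  shows "\<bar>mixed_payoff y u s a\<bar> \<le> M"
proof -
  have y_nonneg: "0 \<le> y a b" for b using assms(1) by (simp add: cond_distr_def Defs.distr_def)
  have y_row_sum: "(\<Sum>b\<in>UNIV. y a b) = 1" using assms(1) by (simp add: cond_distr_def Defs.distr_def)
  have "\<bar>mixed_payoff y u s a\<bar> \<le> (\<Sum>b\<in>UNIV. \<bar>y a b * u s b\<bar>)" unfolding mixed_payoff_def by (rule sum_abs)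
  also have "\<dots> \<le> (\<Sum>b\<in>UNIV. y a b * M)"
    by (rule sum_mono) (simp add: abs_mult y_nonneg mult_left_mono assms(2))
  also have "\<dots> = M" by (simp add: sum_distrib_right[symmetric] y_row_sum)
  finally show ?thesis .
qed

lemma Upay_mix:
  "Upay u \<mu> (\<lambda>a b. e * y0 a b + (1 - e) * y1 a b) = e * Upay u \<mu> y0 + (1 - e) * Upay u \<mu> y1"
proof -
  have i: "(\<Sum>b\<in>UNIV. (e * y0 a b + (1 - e) * y1 a b) * u s b)
      = e * (\<Sum>b\<in>UNIV. y0 a b * u s b) + (1 - e) * (\<Sum>b\<in>UNIV. y1 a b * u s b)" for s a
    by (simp add: distrib_right sum.distrib sum_distrib_left mult.assoc)
  have o: "\<mu> s a * (\<Sum>b\<in>UNIV. (e * y0 a b + (1 - e) * y1 a b) * u s b)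
      = e * (\<mu> s a * (\<Sum>b\<in>UNIV. y0 a b * u s b)) + (1 - e) * (\<mu> s a * (\<Sum>b\<in>UNIV. y1 a b * u s b))" for s a
    unfolding i by (simp add: algebra_simps)
  show ?thesis unfolding Upay_def o by (simp add: sum.distrib sum_distrib_left)
qed

lemma cond_distr_mix:
  assumes "cond_distr y0" "cond_distr y1" "0 \<le> e" "e \<le> 1"
  shows "cond_distr (\<lambda>a b. e * y0 a b + (1 - e) * y1 a b)"
  using assms unfolding cond_distr_def Defs.distr_def
  by (simp add: sum.distrib sum_distrib_left[symmetric])

lemma mixture_strictly_optimal:
  assumes y0: "\<forall>\<mu>\<in>Mset m - {mu0 m}. Upay u \<mu> y0 < Upay u (mu0 m) y0"
    and ybar: "\<forall>\<mu>\<in>Mset m. Upay u \<mu> ybar \<le> Upay u (mu0 m) ybar"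
    and e: "0 < e" "e \<le> 1"
  shows "\<forall>\<mu>\<in>Mset m - {mu0 m}.
    Upay u \<mu> (\<lambda>a b. e * y0 a b + (1 - e) * ybar a b) < Upay u (mu0 m) (\<lambda>a b. e * y0 a b + (1 - e) * ybar a b)"
proof
  fix \<mu> assume \<mu>: "\<mu> \<in> Mset m - {mu0 m}"
  have "e * Upay u \<mu> y0 < e * Upay u (mu0 m) y0" using y0 \<mu> e by simp
  moreover have "(1 - e) * Upay u \<mu> ybar \<le> (1 - e) * Upay u (mu0 m) ybar"
    using ybar \<mu> e by (intro mult_left_mono) auto
  ultimately show "Upay u \<mu> (\<lambda>a b. e * y0 a b + (1 - e) * ybar a b)
      < Upay u (mu0 m) (\<lambda>a b. e * y0 a b + (1 - e) * ybar a b)"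
    unfolding Upay_mix by linarith
qed

section \<open>Nearly optimal frequencies\<close>

lemma sum_UNIV_pair: "(\<Sum>i\<in>(UNIV::('a::finite \<times> 'b::finite) set). f i) = (\<Sum>s\<in>UNIV. \<Sum>a\<in>UNIV. f (s, a))"
  by (simp add: UNIV_Times_UNIV[symmetric] sum.cartesian_product del: UNIV_Times_UNIV)

text \<open>The compactness step: \<open>\<M>\<close> minus an open ball around \<open>\<mu>\<^sub>0\<close> is compact, so the payoff gap
  attains a positive minimum on it.\<close>

lemma Upay_gap_away_from_mu0:
  fixes u :: "'s::finite \<Rightarrow> 'b::finite \<Rightarrow> real"
  assumes strict: "\<forall>\<mu>\<in>Mset m - {mu0 m}. Upay u \<mu> y < Upay u (mu0 m) y"
    and md: "Defs.distr m" and eta: "0 < \<eta>"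
  shows "\<exists>\<beta>>0. \<forall>\<mu>\<in>Mset m. \<eta> \<le> l1dist \<mu> (mu0 m) \<longrightarrow> \<beta> \<le> Upay u (mu0 m) y - Upay u \<mu> y"
proof -
  let ?F = "\<lambda>v::real^('s\<times>'s). Upay u (mu0 m) y - (\<Sum>s\<in>UNIV. \<Sum>a\<in>UNIV. v $ (s, a) * mixed_payoff y u s a)"
  define K where "K = {v::real^('s\<times>'s). (\<forall>i. 0 \<le> v $ i) \<and> (\<forall>s. (\<Sum>a\<in>UNIV. v $ (s, a)) = m s)
      \<and> (\<forall>a. (\<Sum>s\<in>UNIV. v $ (s, a)) = m a) \<and> \<eta> \<le> (\<Sum>s\<in>UNIV. \<Sum>a\<in>UNIV. \<bar>v $ (s, a) - mu0 m s a\<bar>)}"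
  let ?toV = "\<lambda>\<mu>::'s\<Rightarrow>'s\<Rightarrow>real. (\<chi> i. \<mu> (fst i) (snd i)) :: real^('s\<times>'s)"
  have inK: "?toV \<mu> \<in> K" if "\<mu> \<in> Mset m" "\<eta> \<le> l1dist \<mu> (mu0 m)" for \<mu>
    using that by (auto simp: K_def Mset_def l1dist_def)
  have Fv: "?F (?toV \<mu>) = Upay u (mu0 m) y - Upay u \<mu> y" for \<mu>
    by (simp add: Upay_eq_mixed_payoff[of u \<mu>])
  show ?thesis
  proof (cases "K = {}")
    case True
    then show ?thesis using inK by (intro exI[of _ 1]) auto
  next
    case False
    have "K = {v. \<forall>i. 0 \<le> v $ i} \<inter> {v. \<forall>s. (\<Sum>a\<in>UNIV. v $ (s, a)) = m s}
        \<inter> {v. \<forall>a. (\<Sum>s\<in>UNIV. v $ (s, a)) = m a} \<inter> {v. \<eta> \<le> (\<Sum>s\<in>UNIV. \<Sum>a\<in>UNIV. \<bar>v $ (s, a) - mu0 m s a\<bar>)}"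
      by (auto simp: K_def)
    then have "closed K"
      by (simp only:) (intro closed_Int closed_Collect_all closed_Collect_le closed_Collect_eq continuous_intros)
    moreover have "bounded K"
      unfolding bounded_iff
    proof (intro exI ballI)
      fix v assume v: "v \<in> K"
      have "norm v \<le> (\<Sum>i\<in>UNIV. \<bar>v $ i\<bar>)" by (rule norm_le_l1_cart)
      also have "\<dots> = (\<Sum>s\<in>UNIV. \<Sum>a\<in>UNIV. v $ (s, a))" using v by (simp add: sum_UNIV_pair K_def)
      also have "\<dots> = 1" using v md by (simp add: K_def Defs.distr_def)
      finally show "norm v \<le> 1" .
    qed
    ultimately have "compact K" by (simp add: compact_eq_bounded_closed)
    moreover have "continuous_on K ?F" by (intro continuous_intros)
    ultimately obtain v0 where v0: "v0 \<in> K" "\<And>v. v \<in> K \<Longrightarrow> ?F v0 \<le> ?F v"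
      using continuous_attains_inf[OF _ False] by blast
    define \<mu>0 where "\<mu>0 s a = v0 $ (s, a)" for s a
    have v0_eq: "?toV \<mu>0 = v0" by (simp add: \<mu>0_def vec_eq_iff)
    have "\<mu>0 \<in> Mset m" using v0(1) by (auto simp: K_def Mset_def \<mu>0_def)
    moreover have "\<mu>0 \<noteq> mu0 m"
    proof
      assume "\<mu>0 = mu0 m"
      then have "(\<Sum>s\<in>UNIV. \<Sum>a\<in>UNIV. \<bar>v0 $ (s, a) - mu0 m s a\<bar>) = 0" by (simp add: \<mu>0_def[symmetric])
      then show False using v0(1) eta by (simp add: K_def)
    qed
    ultimately have "0 < ?F v0" using strict Fv[of \<mu>0] unfolding v0_eq by auto
    moreover have "?F v0 \<le> Upay u (mu0 m) y - Upay u \<mu> y"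
      if "\<mu> \<in> Mset m" "\<eta> \<le> l1dist \<mu> (mu0 m)" for \<mu>
      using v0(2)[OF inK[OF that]] Fv[of \<mu>] by simp
    ultimately show ?thesis by blast
  qed
qed

lemma l1dist_triangle: "l1dist \<mu> \<nu> \<le> l1dist \<mu> \<mu>' + l1dist \<mu>' (\<nu> :: 's::finite \<Rightarrow> 's \<Rightarrow> real)"
  unfolding l1dist_def sum.distrib[symmetric] by (intro sum_mono) (simp add: sum.distrib[symmetric] sum_mono abs_triangle_ineq4[of _ _] abs_diff_triangle_ineq)

text \<open>Add the product of the row and column deficits, normalised by the total deficit.\<close>

lemma Mset_completion:
  fixes \<nu> :: "'s::finite \<Rightarrow> 's \<Rightarrow> real"
  assumes nn: "\<And>s a. 0 \<le> \<nu> s a" and rows: "\<And>s. (\<Sum>a\<in>UNIV. \<nu> s a) \<le> m s"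
    and cols: "\<And>a. (\<Sum>s\<in>UNIV. \<nu> s a) \<le> m a"
  shows "\<exists>\<mu>\<in>Mset m. l1dist \<nu> \<mu> = (\<Sum>a\<in>UNIV. m a - (\<Sum>s\<in>UNIV. \<nu> s a))"
proof -
  define r where "r s = m s - (\<Sum>a\<in>UNIV. \<nu> s a)" for s
  define cc where "cc a = m a - (\<Sum>s\<in>UNIV. \<nu> s a)" for a
  define R where "R = (\<Sum>a\<in>UNIV. cc a)"
  define \<mu> where "\<mu> s a = \<nu> s a + (if R = 0 then 0 else r s * cc a / R)" for s a
  have r0: "0 \<le> r s" for s using rows[of s] by (simp add: r_def)
  have cc0: "0 \<le> cc a" for a using cols[of a] by (simp add: cc_def)
  have R0: "0 \<le> R" unfolding R_def by (intro sum_nonneg cc0)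
  have "(\<Sum>s\<in>UNIV. r s) = (\<Sum>s\<in>UNIV. m s) - (\<Sum>s\<in>UNIV. \<Sum>a\<in>UNIV. \<nu> s a)"
    by (simp add: r_def sum_subtractf)
  also have "(\<Sum>s\<in>UNIV. \<Sum>a\<in>UNIV. \<nu> s a) = (\<Sum>a\<in>UNIV. \<Sum>s\<in>UNIV. \<nu> s a)" by (rule sum.swap)
  finally have sr: "(\<Sum>s\<in>UNIV. r s) = R" by (simp add: R_def cc_def sum_subtractf)
  have "\<mu> \<in> Mset m"
    unfolding Mset_def
  proof (intro CollectI conjI allI)
    show "0 \<le> \<mu> s a" for s a using nn[of s a] r0[of s] cc0[of a] R0 by (simp add: \<mu>_def)
    show "(\<Sum>a\<in>UNIV. \<mu> s a) = m s" for s
    proof (cases "R = 0")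
      case True
      then have "\<forall>s\<in>UNIV. r s = 0" using sr r0 by (subst sum_nonneg_eq_0_iff[symmetric]) auto
      then show ?thesis using True by (simp add: \<mu>_def r_def)
    next
      case False
      then have "(\<Sum>a\<in>UNIV. \<mu> s a) = (\<Sum>a\<in>UNIV. \<nu> s a) + r s * R / R"
        by (simp add: \<mu>_def R_def sum.distrib sum_distrib_left sum_divide_distrib[symmetric])
      then show ?thesis using False by (simp add: r_def)
    qed
    show "(\<Sum>s\<in>UNIV. \<mu> s a) = m a" for a
    proof (cases "R = 0")
      case True
      then have "\<forall>a\<in>UNIV. cc a = 0" using R_def cc0 by (subst sum_nonneg_eq_0_iff[symmetric]) auto
      then show ?thesis using True by (simp add: \<mu>_def cc_def)
    next
      case False
      then have "(\<Sum>s\<in>UNIV. \<mu> s a) = (\<Sum>s\<in>UNIV. \<nu> s a) + R * cc a / R"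
        by (simp add: \<mu>_def sum.distrib sum_divide_distrib[symmetric] sum_distrib_right[symmetric] sr)
      then show ?thesis using False by (simp add: cc_def)
    qed
  qed
  moreover have "l1dist \<nu> \<mu> = (\<Sum>s\<in>UNIV. \<Sum>a\<in>UNIV. if R = 0 then 0 else r s * cc a / R)"
    unfolding l1dist_def \<mu>_def using r0 cc0 R0 by (intro sum.cong refl) auto
  moreover have "\<dots> = R"
  proof (cases "R = 0")
    case False
    have "(\<Sum>s\<in>UNIV. \<Sum>a\<in>UNIV. r s * cc a / R) = (\<Sum>s\<in>UNIV. r s) * (\<Sum>a\<in>UNIV. cc a) / R"
      by (simp add: sum_divide_distrib[symmetric] sum_distrib_left[symmetric] sum_distrib_right[symmetric])
    then show ?thesis using False by (simp add: sr R_def[symmetric])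
  qed simp
  ultimately show ?thesis unfolding R_def cc_def by auto
qed

text \<open>Scaling each column of \<open>\<mu>\<close> down to at most \<open>m\<close> and completing costs exactly the
  column excesses plus the column deficits.\<close>

lemma Mset_projection:
  fixes m :: "'s::finite \<Rightarrow> real" and \<mu> :: "'s \<Rightarrow> 's \<Rightarrow> real"
  assumes nn: "\<And>s a. 0 \<le> \<mu> s a" and row: "\<And>s. (\<Sum>a\<in>UNIV. \<mu> s a) = m s"
  shows "\<exists>\<mu>'\<in>Mset m. l1dist \<mu> \<mu>' \<le> (\<Sum>a\<in>UNIV. \<bar>(\<Sum>s\<in>UNIV. \<mu> s a) - m a\<bar>)"
proof -
  define q where "q a = (\<Sum>s\<in>UNIV. \<mu> s a)" for a
  have m0: "0 \<le> m s" for s using row[of s] nn by (metis sum_nonneg)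
  have q0: "0 \<le> q a" for a unfolding q_def by (intro sum_nonneg) (simp add: nn)
  define lam where "lam a = (if q a \<le> m a then 1 else m a / q a)" for a
  have l0: "0 \<le> lam a" "lam a \<le> 1" for a using m0[of a] q0[of a] by (auto simp: lam_def field_simps)
  define \<nu> where "\<nu> s a = \<mu> s a * lam a" for s a
  have \<nu>\<mu>: "0 \<le> \<nu> s a" "\<nu> s a \<le> \<mu> s a" for s a
    unfolding \<nu>_def using nn[of s a] l0[of a] by (simp_all add: mult_left_le)
  have col\<nu>: "(\<Sum>s\<in>UNIV. \<nu> s a) = min (q a) (m a)" for a
    using m0[of a] q0[of a] by (auto simp: \<nu>_def lam_def q_def sum_distrib_right[symmetric])
  obtain \<mu>' where \<mu>': "\<mu>' \<in> Mset m" "l1dist \<nu> \<mu>' = (\<Sum>a\<in>UNIV. m a - min (q a) (m a))"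
  proof (rule bexE[OF Mset_completion[of \<nu> m]])
    show "(\<Sum>a\<in>UNIV. \<nu> s a) \<le> m s" for s using row[of s] by (metis \<nu>\<mu>(2) sum_mono)
  qed (use \<nu>\<mu> col\<nu> in auto)
  have "l1dist \<mu> \<nu> = (\<Sum>a\<in>UNIV. \<Sum>s\<in>UNIV. \<mu> s a - \<nu> s a)"
    unfolding l1dist_def using \<nu>\<mu> by (subst sum.swap) (simp add: abs_of_nonneg)
  also have "\<dots> = (\<Sum>a\<in>UNIV. q a - min (q a) (m a))" by (simp add: sum_subtractf q_def col\<nu>)
  finally have "l1dist \<mu> \<mu>' \<le> (\<Sum>a\<in>UNIV. q a - min (q a) (m a)) + (\<Sum>a\<in>UNIV. m a - min (q a) (m a))"
    using l1dist_triangle[of \<mu> \<mu>' \<nu>] \<mu>'(2) by simp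
  also have "\<dots> = (\<Sum>a\<in>UNIV. \<bar>q a - m a\<bar>)"
    by (simp only: sum.distrib[symmetric]) (intro sum.cong refl, simp add: min_def)
  finally show ?thesis using \<mu>'(1) unfolding q_def by blast
qed

lemma Upay_lipschitz:
  assumes "\<And>s a. \<bar>mixed_payoff y u s a\<bar> \<le> M"
  shows "\<bar>Upay u \<mu> y - Upay u \<nu> y\<bar> \<le> M * l1dist \<mu> \<nu>"
proof -
  have "\<bar>Upay u \<mu> y - Upay u \<nu> y\<bar> = \<bar>\<Sum>s\<in>UNIV. \<Sum>a\<in>UNIV. (\<mu> s a - \<nu> s a) * mixed_payoff y u s a\<bar>"
    by (simp add: Upay_eq_mixed_payoff sum_subtractf left_diff_distrib)
  also have "\<dots> \<le> (\<Sum>s\<in>UNIV. \<Sum>a\<in>UNIV. \<bar>(\<mu> s a - \<nu> s a) * mixed_payoff y u s a\<bar>)"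
    by (rule order_trans[OF sum_abs sum_mono[OF sum_abs]])
  also have "\<dots> \<le> (\<Sum>s\<in>UNIV. \<Sum>a\<in>UNIV. \<bar>\<mu> s a - \<nu> s a\<bar> * M)"
    by (intro sum_mono) (simp add: abs_mult assms mult_left_mono)
  also have "\<dots> = M * l1dist \<mu> \<nu>" by (simp add: l1dist_def sum_distrib_left sum_distrib_right mult_ac)
  finally show ?thesis .
qed

lemma abs_le_Max_range: "\<bar>f x\<bar> \<le> Max (range (\<lambda>x::'a::finite. \<bar>f x :: real\<bar>))"
  by (rule Max_ge) auto

definition near_Mset :: "('s::finite \<Rightarrow> real) \<Rightarrow> real \<Rightarrow> ('s \<Rightarrow> 's \<Rightarrow> real) \<Rightarrow> bool" where
  "near_Mset m \<rho> \<mu> \<longleftrightarrow> (\<forall>s a. 0 \<le> \<mu> s a) \<and> (\<forall>s. (\<Sum>a\<in>UNIV. \<mu> s a) = m s)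
     \<and> (\<Sum>a\<in>UNIV. \<bar>(\<Sum>s\<in>UNIV. \<mu> s a) - m a\<bar>) \<le> \<rho>"

text \<open>Project onto \<open>\<M>\<close>, then use the uniform gap and the Lipschitz continuity of the payoff.\<close>

lemma near_optimal_imp_near_mu0:
  fixes u :: "'s::finite \<Rightarrow> 'b::finite \<Rightarrow> real"
  assumes strict: "\<forall>\<mu>\<in>Mset m - {mu0 m}. Upay u \<mu> y < Upay u (mu0 m) y"
    and md: "Defs.distr m" and eta: "0 < \<eta>"
  shows "\<exists>\<rho>>0. \<exists>\<kappa>>0. \<forall>\<mu>. near_Mset m \<rho> \<mu> \<and> Upay u (mu0 m) y - Upay u \<mu> y \<le> \<kappa>
    \<longrightarrow> l1dist \<mu> (mu0 m) < \<eta>"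
proof -
  obtain \<beta> where \<beta>: "\<beta> > 0" "\<forall>\<mu>\<in>Mset m. \<eta> / 2 \<le> l1dist \<mu> (mu0 m) \<longrightarrow> \<beta> \<le> Upay u (mu0 m) y - Upay u \<mu> y"
    using Upay_gap_away_from_mu0[OF strict md, of "\<eta> / 2"] eta by auto
  define M where "M = Max (range (\<lambda>x. \<bar>case_prod (mixed_payoff y u) x\<bar>))"
  have Mb: "\<bar>mixed_payoff y u s a\<bar> \<le> M" for s a
    using abs_le_Max_range[of "case_prod (mixed_payoff y u)" "(s, a)"] by (simp add: M_def)
  have M0: "0 \<le> M" using Mb[of undefined undefined] by simp
  define \<rho> where "\<rho> = min (\<eta> / 4) (\<beta> / (4 * (M + 1)))"
  have \<rho>0: "0 < \<rho>" using eta \<beta>(1) M0 by (simp add: \<rho>_def)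
  have \<rho>\<eta>: "\<rho> \<le> \<eta> / 4" unfolding \<rho>_def by (rule min.cobounded1)
  have \<rho>M: "M * \<rho> \<le> \<beta> / 4"
  proof -
    have "M * \<rho> \<le> M * (\<beta> / (4 * (M + 1)))" unfolding \<rho>_def by (intro mult_left_mono M0) simp
    also have "\<dots> \<le> \<beta> / 4" using M0 \<beta>(1) by (simp add: field_simps)
    finally show ?thesis .
  qed
  have "l1dist \<mu> (mu0 m) < \<eta>"
    if near: "near_Mset m \<rho> \<mu>" and gap: "Upay u (mu0 m) y - Upay u \<mu> y \<le> \<beta> / 2" for \<mu>
  proof (rule ccontr)
    assume far: "\<not> l1dist \<mu> (mu0 m) < \<eta>"
    obtain \<mu>' where \<mu>': "\<mu>' \<in> Mset m" "l1dist \<mu> \<mu>' \<le> \<rho>"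
      using Mset_projection[of \<mu> m] near unfolding near_Mset_def by fastforce
    have "\<eta> / 2 \<le> l1dist \<mu>' (mu0 m)"
      using far eta \<mu>'(2) \<rho>\<eta> l1dist_triangle[of \<mu> "mu0 m" \<mu>'] by linarith
    then have "\<beta> \<le> Upay u (mu0 m) y - Upay u \<mu>' y" using \<beta>(2) \<mu>'(1) by blast
    moreover have "\<bar>Upay u \<mu> y - Upay u \<mu>' y\<bar> \<le> M * \<rho>"
      using Upay_lipschitz[OF Mb, of \<mu> \<mu>'] mult_left_mono[OF \<mu>'(2) M0] by linarith
    ultimately show False using gap \<rho>M \<beta>(1) by (simp add: abs_le_iff)
  qed
  then show ?thesis using \<rho>0 \<beta>(1) by (intro exI[of _ \<rho>] conjI exI[of _ "\<beta> / 2"]) auto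
qed

section \<open>Expectations over plays\<close>

lemma sum_delta_pair_inner: "(\<Sum>a\<in>UNIV. (if x = s \<and> z = a then 1 else 0) * (f s a :: real)) = (if x = s then 1 else 0) * f s (z::'a::finite)"
  by (cases "x = s") (simp_all add: sum_delta_mult_left)

lemma sum_delta_pair: "(\<Sum>s\<in>UNIV. \<Sum>a\<in>UNIV. (if x = s \<and> z = a then 1 else 0) * (f s a :: real)) = f (x::'s::finite) (z::'a::finite)"
proof -
  have "(\<Sum>s\<in>UNIV. \<Sum>a\<in>UNIV. (if x = s \<and> z = a then 1 else 0) * f s a) = (\<Sum>s\<in>UNIV. (if x = s then 1 else 0) * f s z)"
    by (rule sum.cong[OF refl]) (rule sum_delta_pair_inner)
  then show ?thesis by (simp add: sum_delta_mult_left)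
qed

lemma sum_indicator_conj_right: "(\<Sum>a\<in>(UNIV::'a::finite set). if P \<and> t = a then 1 else 0) = (if P then 1 else (0::real))"
  by (cases P) (simp_all add: sum.delta)

lemma sum_indicator_conj_left: "(\<Sum>s\<in>(UNIV::'a::finite set). if t = s \<and> P then 1 else 0) = (if P then 1 else (0::real))"
  by (cases P) (simp_all add: sum.delta')

lemma sum_plays_Suc:
  "(\<Sum>h\<in>plays (Suc j). f h) = (\<Sum>g\<in>plays j. \<Sum>x\<in>(UNIV::('s::finite \<times> 's \<times> 'b::finite) set). f (g @ [x]))"
proof -
  have e: "plays (Suc j) = (\<lambda>(g,x). g @ [x]) ` (plays j \<times> (UNIV::('s \<times> 's \<times> 'b) set))"
  proof (rule set_eqI, rule iffI)
    fix h :: "('s \<times> 's \<times> 'b) list" assume "h \<in> plays (Suc j)"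
    then have "length h = Suc j" by (simp add: plays_def)
    then have "h = butlast h @ [last h]" "length (butlast h) = j"
      by (metis append_butlast_last_id list.size(3) nat.distinct(1), simp)
    then show "h \<in> (\<lambda>(g,x). g @ [x]) ` (plays j \<times> UNIV)"
      by (metis (mono_tags, lifting) SigmaI UNIV_I image_iff mem_Collect_eq old.prod.case plays_def)
  qed (auto simp: plays_def)
  have i: "inj_on (\<lambda>(g,x). g @ [x]) (plays j \<times> (UNIV::('s \<times> 's \<times> 'b) set))"
    by (auto simp: inj_on_def)
  show ?thesis
    unfolding e sum.reindex[OF i]
    by (simp add: sum.cartesian_product split_def)
qed

lemma sum_UNIV_triple: "(\<Sum>x\<in>(UNIV::('a::finite \<times> 'b::finite \<times> 'c::finite) set). f x)
   = (\<Sum>s\<in>UNIV. \<Sum>a\<in>UNIV. \<Sum>b\<in>UNIV. f (s, a, b))"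
  by (simp add: UNIV_Times_UNIV[symmetric] sum.cartesian_product del: UNIV_Times_UNIV)

locale sender_play =
  fixes p :: "'s::finite \<Rightarrow> 's \<Rightarrow> real" and m :: "'s \<Rightarrow> real"
    and y :: "'s \<Rightarrow> 'b::finite \<Rightarrow> real" and N :: nat and mN :: "'s \<Rightarrow> real"
    and c :: "'s list \<Rightarrow> 's list" and \<sigma> :: "('s, 'b) sstrat"
  assumes st: "stochastic p" and im: "invariant_measure p m" and yd: "cond_distr y"
    and sd: "sender_strategy \<sigma>"
begin

definition weight :: "nat \<Rightarrow> ('s \<times> 's \<times> 'b) list \<Rightarrow> real" where
  "weight j g = (let st = map fst g; ms = map (fst \<circ> snd) g; bs = map (snd \<circ> snd) g in
       m (st ! 0)
       * (\<Prod>k<j. \<sigma> (take k g) (st ! k) (ms ! k) * y (theta N mN c ms (Suc k)) (bs ! k))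
       * (\<Prod>k<j - 1. p (st ! k) (st ! Suc k)))"

definition expect :: "nat \<Rightarrow> (('s \<times> 's \<times> 'b) list \<Rightarrow> real) \<Rightarrow> real" where
  "expect j F = (\<Sum>g\<in>plays j. weight j g * F g)"

lemma hprob_eq_weight: "hprob p m y N mN c \<sigma> h = weight N h"
  by (simp add: hprob_def weight_def)

lemma m_distr: "\<And>s. 0 \<le> m s" "(\<Sum>s\<in>UNIV. m s) = 1"
  and m_invariant: "\<And>t. (\<Sum>s\<in>UNIV. m s * p s t) = m t"
  using im by (auto simp: invariant_measure_def Defs.distr_def)

lemma p_nonneg: "\<And>s t. 0 \<le> p s t" and p_row_sum: "\<And>s. (\<Sum>t\<in>UNIV. p s t) = 1"
  using st by (auto simp: stochastic_def)

lemma y_nonneg: "\<And>a b. 0 \<le> y a b" and y_row_sum: "\<And>a. (\<Sum>b\<in>UNIV. y a b) = 1"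
  using yd by (auto simp: cond_distr_def Defs.distr_def)

lemma sigma_nonneg: "\<And>h s a. 0 \<le> \<sigma> h s a" and sigma_row_sum: "\<And>h s. (\<Sum>a\<in>UNIV. \<sigma> h s a) = 1"
  using sd by (auto simp: sender_strategy_def Defs.distr_def)

lemma weight_nonneg: "0 \<le> weight j g"
  unfolding weight_def Let_def
  by (intro mult_nonneg_nonneg prod_nonneg m_distr p_nonneg y_nonneg sigma_nonneg ballI)

lemma weight_Suc_0: "weight (Suc 0) [(s, a, b)] = m s * (\<sigma> [] s a * y (theta N mN c [a] 1) b)"
  by (simp add: weight_def)

lemma weight_append:
  assumes "length g = j" "1 \<le> j" "Suc j \<le> N"
  shows "weight (Suc j) (g @ [(s, a, b)]) = weight j g *
     (p (fst (g ! (j - 1))) s * (\<sigma> g s a * y (theta N mN c (map (fst \<circ> snd) g @ [a]) (Suc j)) b))"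
proof -
  let ?st = "map fst g" and ?ms = "map (fst \<circ> snd) g" and ?bs = "map (snd \<circ> snd) g"
  have p1: "(\<Prod>k<Suc j. \<sigma> (take k (g @ [(s,a,b)])) ((?st @ [s]) ! k) ((?ms @ [a]) ! k) *
              y (theta N mN c (?ms @ [a]) (Suc k)) ((?bs @ [b]) ! k))
      = (\<Prod>k<j. \<sigma> (take k g) (?st ! k) (?ms ! k) * y (theta N mN c ?ms (Suc k)) (?bs ! k))
        * (\<sigma> g s a * y (theta N mN c (?ms @ [a]) (Suc j)) b)"
  proof -
    have "(\<Prod>k<j. \<sigma> (take k (g @ [(s,a,b)])) ((?st @ [s]) ! k) ((?ms @ [a]) ! k) *
              y (theta N mN c (?ms @ [a]) (Suc k)) ((?bs @ [b]) ! k))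
        = (\<Prod>k<j. \<sigma> (take k g) (?st ! k) (?ms ! k) * y (theta N mN c ?ms (Suc k)) (?bs ! k))"
    proof (rule prod.cong)
      fix k assume "k \<in> {..<j}"
      then have k: "k < j" by simp
      have "theta N mN c (?ms @ [a]) (Suc k) = theta N mN c ?ms (Suc k)"
        using k assms by (intro theta_append) auto
      then show "\<sigma> (take k (g @ [(s,a,b)])) ((?st @ [s]) ! k) ((?ms @ [a]) ! k) *
              y (theta N mN c (?ms @ [a]) (Suc k)) ((?bs @ [b]) ! k)
        = \<sigma> (take k g) (?st ! k) (?ms ! k) * y (theta N mN c ?ms (Suc k)) (?bs ! k)"
        using k assms(1) by (simp add: nth_append)
    qed simp
    then show ?thesis using assms(1) by (simp add: nth_append)
  qed
  have p2: "(\<Prod>k<Suc j - 1. p ((?st @ [s]) ! k) ((?st @ [s]) ! Suc k))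
      = (\<Prod>k<j - 1. p (?st ! k) (?st ! Suc k)) * p (fst (g ! (j - 1))) s"
  proof -
    obtain i where i: "j = Suc i" using assms(2) by (cases j) auto
    have "(\<Prod>k<Suc i. p ((?st @ [s]) ! k) ((?st @ [s]) ! Suc k))
        = (\<Prod>k<i. p ((?st @ [s]) ! k) ((?st @ [s]) ! Suc k)) * p ((?st @ [s]) ! i) ((?st @ [s]) ! Suc i)"
      by simp
    also have "(\<Prod>k<i. p ((?st @ [s]) ! k) ((?st @ [s]) ! Suc k)) = (\<Prod>k<i. p (?st ! k) (?st ! Suc k))"
      using assms(1) i by (intro prod.cong) (auto simp: nth_append)
    finally show ?thesis using assms(1) i by (simp add: nth_append)
  qed
  have m0: "m ((?st @ [s]) ! 0) = m (?st ! 0)" using assms by (simp add: nth_append)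
  show ?thesis
    unfolding weight_def Let_def using p1 p2 m0 by (simp add: mult_ac)
qed

lemma expect_Suc:
  assumes "Suc k \<le> N"
  shows "expect (Suc k) F = (if k = 0 then
      (\<Sum>s\<in>UNIV. m s * (\<Sum>a\<in>UNIV. \<sigma> [] s a * (\<Sum>b\<in>UNIV. y (theta N mN c [a] 1) b * F [(s, a, b)])))
    else expect k (\<lambda>g. \<Sum>s\<in>UNIV. p (fst (g ! (k - 1))) s * (\<Sum>a\<in>UNIV. \<sigma> g s a *
         (\<Sum>b\<in>UNIV. y (theta N mN c (map (fst \<circ> snd) g @ [a]) (Suc k)) b * F (g @ [(s, a, b)])))))"
proof (cases "k = 0")
  case True
  have pz: "plays 0 = {[]}" by (auto simp: plays_def)
  show ?thesis using True
    by (simp add: pz expect_def sum_plays_Suc sum_UNIV_triple weight_Suc_0 sum_distrib_left mult_ac)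
next
  case False
  have "expect (Suc k) F = (\<Sum>g\<in>plays k. \<Sum>x\<in>UNIV. weight (Suc k) (g @ [x]) * F (g @ [x]))"
    by (simp add: expect_def sum_plays_Suc)
  also have "\<dots> = (\<Sum>g\<in>plays k. weight k g * (\<Sum>s\<in>UNIV. p (fst (g ! (k - 1))) s * (\<Sum>a\<in>UNIV. \<sigma> g s a *
         (\<Sum>b\<in>UNIV. y (theta N mN c (map (fst \<circ> snd) g @ [a]) (Suc k)) b * F (g @ [(s, a, b)])))))"
  proof (rule sum.cong[OF refl])
    fix g :: "('s \<times> 's \<times> 'b) list" assume "g \<in> plays k"
    then have lg: "length g = k" by (simp add: plays_def)
    show "(\<Sum>x\<in>(UNIV::('s\<times>'s\<times>'b) set). weight (Suc k) (g @ [x]) * F (g @ [x])) = weight k g * (\<Sum>s\<in>UNIV. p (fst (g ! (k - 1))) s * (\<Sum>a\<in>UNIV. \<sigma> g s a *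
         (\<Sum>b\<in>UNIV. y (theta N mN c (map (fst \<circ> snd) g @ [a]) (Suc k)) b * F (g @ [(s, a, b)]))))"
      unfolding sum_UNIV_triple using weight_append[OF lg _ assms] False
      by (simp add: sum_distrib_left mult_ac)
  qed
  finally show ?thesis using False by (simp add: expect_def)
qed

lemma expect_cong: "(\<And>g. g \<in> plays j \<Longrightarrow> F g = G g) \<Longrightarrow> expect j F = expect j G"
  unfolding expect_def by (rule sum.cong) auto

lemma expect_add: "expect j (\<lambda>g. F g + G g) = expect j F + expect j G"
  unfolding expect_def by (simp add: distrib_left sum.distrib)

lemma expect_diff: "expect j (\<lambda>g. F g - G g) = expect j F - expect j G"
  unfolding expect_def by (simp add: right_diff_distrib sum_subtractf)

lemma expect_cmult: "expect j (\<lambda>g. a * F g) = a * expect j F"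
  unfolding expect_def by (simp add: sum_distrib_left mult_ac)

lemma expect_mult_right: "expect j F * a = expect j (\<lambda>g. F g * a)"
  unfolding expect_def by (simp add: sum_distrib_right mult.assoc)

lemma expect_sum: "expect j (\<lambda>g. \<Sum>i\<in>I. F i g) = (\<Sum>i\<in>I. expect j (F i))"
  unfolding expect_def by (simp add: sum_distrib_left sum.swap[of _ I])

lemma expect_mono: "(\<And>g. g \<in> plays j \<Longrightarrow> F g \<le> G g) \<Longrightarrow> expect j F \<le> expect j G"
  unfolding expect_def by (rule sum_mono) (auto intro: mult_left_mono weight_nonneg)

lemma expect_mono_support: "(\<And>g. g \<in> plays j \<Longrightarrow> weight j g \<noteq> 0 \<Longrightarrow> F g \<le> F2 g) \<Longrightarrow> expect j F \<le> expect j F2"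
  unfolding expect_def
proof (rule sum_mono)
  fix g :: "('s \<times> 's \<times> 'b) list" assume g: "g \<in> plays j" and h: "\<And>g. g \<in> plays j \<Longrightarrow> weight j g \<noteq> 0 \<Longrightarrow> F g \<le> F2 g"
  show "weight j g * F g \<le> weight j g * F2 g"
  proof (cases "weight j g = 0")
    case False then show ?thesis using h[OF g] weight_nonneg by (simp add: mult_left_mono)
  qed simp
qed

lemma sum_sigma_y_const: "(\<Sum>a\<in>UNIV. \<sigma> g s a * (\<Sum>b\<in>UNIV. y (f a) b * K)) = K"
  by (simp add: sum_distrib_right[symmetric] y_row_sum sigma_row_sum mult.assoc[symmetric])

lemma sum_p_sigma_y_const: "(\<Sum>s\<in>UNIV. p r s * (\<Sum>a\<in>UNIV. \<sigma> g s a * (\<Sum>b\<in>UNIV. y (f a) b * K))) = K"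
  by (simp add: sum_distrib_right[symmetric] y_row_sum sigma_row_sum p_row_sum mult.assoc[symmetric])

lemma sum_m_sigma_y_const: "(\<Sum>s\<in>UNIV. m s * (\<Sum>a\<in>UNIV. \<sigma> g s a * (\<Sum>b\<in>UNIV. y (f a) b * K))) = K"
  by (simp add: sum_distrib_right[symmetric] y_row_sum sigma_row_sum m_distr mult.assoc[symmetric])

lemma expect_take:
  assumes "1 \<le> j" "j \<le> n" "n \<le> N"
  shows "expect n (\<lambda>g. F (take j g)) = expect j F"
  using assms(2,3)
proof (induction n rule: dec_induct)
  case base
  show ?case by (rule expect_cong) (simp add: plays_def)
next
  case (step n)
  have n0: "n \<noteq> 0" using step assms(1) by simp
  have "expect (Suc n) (\<lambda>g. F (take j g)) = expect n (\<lambda>g. F (take j g))"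
    unfolding expect_Suc[OF step(4)] using n0
    by (simp, intro expect_cong) (use step(1) in \<open>simp add: plays_def sum_p_sigma_y_const\<close>)
  then show ?case using step by simp
qed

lemma expect_const: assumes "1 \<le> j" "j \<le> N" shows "expect j (\<lambda>_. a) = a"
proof -
  have "expect j (\<lambda>_. a) = expect 1 (\<lambda>_. a)" using expect_take[OF _ assms(1,2), where F="\<lambda>_. a"] by simp
  also have "\<dots> = a" using expect_Suc[of 0 "\<lambda>_. a"] assms by (simp add: sum_m_sigma_y_const)
  finally show ?thesis .
qed

lemma expect_state:
  assumes "Suc k \<le> N"
  shows "expect (Suc k) (\<lambda>g. f (fst (g ! k))) = (\<Sum>t\<in>UNIV. m t * f t)"
  using assms
proof (induction k arbitrary: f)
  case 0
  show ?case using expect_Suc[OF 0(1)] by (simp add: sum_sigma_y_const)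
next
  case (Suc k)
  have "expect (Suc (Suc k)) (\<lambda>g. f (fst (g ! Suc k))) = expect (Suc k) (\<lambda>g. \<Sum>s\<in>UNIV. p (fst (g ! k)) s * f s)"
    unfolding expect_Suc[OF Suc(2)]
    by (simp, intro expect_cong) (simp add: plays_def nth_append y_row_sum sigma_row_sum sum_distrib_left[symmetric] mult_ac)
  also have "\<dots> = (\<Sum>t\<in>UNIV. m t * (\<Sum>s\<in>UNIV. p t s * f s))" using Suc by simp
  also have "\<dots> = (\<Sum>s\<in>UNIV. (\<Sum>t\<in>UNIV. m t * p t s) * f s)"
    by (simp add: sum_distrib_left sum_distrib_right mult_ac, rule sum.swap)
  finally show ?case by (simp add: m_invariant)
qed

lemma expect_markov_step:
  assumes "1 \<le> k" "Suc k \<le> N"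
  shows "expect (Suc k) (\<lambda>g. F (take k g) * f (fst (g ! k)))
       = expect k (\<lambda>g. F g * (\<Sum>s\<in>UNIV. p (fst (g ! (k - 1))) s * f s))"
  unfolding expect_Suc[OF assms(2)] using assms(1)
  by (simp, intro expect_cong) (simp add: plays_def nth_append sum_sigma_y_const, simp add: sum_distrib_left mult_ac)

lemma expect_pn:
  assumes "j \<le> k" "Suc k \<le> N"
  shows "expect (Suc k) (\<lambda>g. F (take (Suc j) g) * f (fst (g ! k)))
       = expect (Suc j) (\<lambda>g. F g * (\<Sum>t\<in>UNIV. pn p (k - j) (fst (g ! j)) t * f t))"
  using assms
proof (induction k arbitrary: f rule: dec_induct)
  case base
  show ?case by (rule expect_cong) (simp add: plays_def sum_delta_mult_left)
next
  case (step k)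
  let ?f' = "\<lambda>r. \<Sum>s\<in>UNIV. p r s * f s"
  have "expect (Suc (Suc k)) (\<lambda>g. F (take (Suc j) g) * f (fst (g ! Suc k)))
      = expect (Suc (Suc k)) (\<lambda>g. (F \<circ> take (Suc j)) (take (Suc k) g) * f (fst (g ! Suc k)))"
    using step(1) by (simp add: min_def)
  also have "\<dots> = expect (Suc k) (\<lambda>g. F (take (Suc j) g) * ?f' (fst (g ! k)))"
    using expect_markov_step[of "Suc k" "F \<circ> take (Suc j)" f] step(4) by simp
  also have "\<dots> = expect (Suc j) (\<lambda>g. F g * (\<Sum>t\<in>UNIV. pn p (k - j) (fst (g ! j)) t * ?f' t))"
    using step by simp
  also have "\<dots> = expect (Suc j) (\<lambda>g. F g * (\<Sum>t\<in>UNIV. pn p (Suc k - j) (fst (g ! j)) t * f t))"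
  proof (rule expect_cong)
    fix g :: "('s \<times> 's \<times> 'b) list"
    have e: "Suc k - j = Suc (k - j)" using step(1) by simp
    have "(\<Sum>t\<in>UNIV. pn p (k - j) (fst (g ! j)) t * ?f' t)
        = (\<Sum>s\<in>UNIV. (\<Sum>t\<in>UNIV. pn p (k - j) (fst (g ! j)) t * p t s) * f s)"
      by (simp add: sum_distrib_left sum_distrib_right mult_ac, rule sum.swap)
    then show "F g * (\<Sum>t\<in>UNIV. pn p (k - j) (fst (g ! j)) t * ?f' t)
        = F g * (\<Sum>t\<in>UNIV. pn p (Suc k - j) (fst (g ! j)) t * f t)"
      unfolding e by simp
  qed
  finally show ?case .
qed

lemma expect_action:
  assumes "Suc k \<le> N"
  shows "expect (Suc k) (\<lambda>g. u (fst (g ! k)) (snd (snd (g ! k))))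
       = expect (Suc k) (\<lambda>g. \<Sum>b\<in>UNIV. y (theta N mN c (map (fst \<circ> snd) g) (Suc k)) b * u (fst (g ! k)) b)"
proof (cases "k = 0")
  case True
  then show ?thesis unfolding expect_Suc[OF assms] by (simp add: y_row_sum sum_distrib_right[symmetric])
next
  case False
  then show ?thesis unfolding expect_Suc[OF assms]
    by (simp, intro expect_cong) (simp add: plays_def nth_append y_row_sum sum_distrib_right[symmetric])
qed

lemma expect_abs_bound:
  assumes "1 \<le> j" "j \<le> N" "\<And>g. \<bar>F g\<bar> \<le> M"
  shows "\<bar>expect j F\<bar> \<le> M"
proof -
  have "expect j F \<le> expect j (\<lambda>_. M)" by (rule expect_mono) (use assms(3) abs_le_D1 in blast)
  moreover have "expect j (\<lambda>_. - M) \<le> expect j F"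
  proof (rule expect_mono)
    fix g have "\<bar>F g\<bar> \<le> M" by (rule assms(3))
    then show "- M \<le> F g" by linarith
  qed
  ultimately show ?thesis using expect_const[OF assms(1,2)] by (simp add: abs_le_iff)
qed

definition stage_payoff :: "('s \<Rightarrow> 'b \<Rightarrow> real) \<Rightarrow> nat \<Rightarrow> real" where
  "stage_payoff u k = expect (Suc k) (\<lambda>g. mixed_payoff y u (fst (g ! k)) (theta N mN c (map (fst \<circ> snd) g) (Suc k)))"

lemma mu_st_eq_expect: "mu_st p m y N mN c \<sigma> s a
   = expect N (\<lambda>h. (\<Sum>k<N. if fst (h ! k) = s \<and> theta N mN c (map (fst \<circ> snd) h) (Suc k) = a then 1 else 0) / real N)"
  by (simp add: mu_st_def expect_def hprob_eq_weight)

lemma theta_take_history: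
  assumes "h \<in> plays N" "k < N"
  shows "theta N mN c (map (fst \<circ> snd) (take (Suc k) h)) (Suc k) = theta N mN c (map (fst \<circ> snd) h) (Suc k)"
  using assms theta_take[of "Suc k" N "map (fst \<circ> snd) h" mN c] by (simp add: plays_def take_map)

lemma expect_stage:
  assumes "k < N"
  shows "expect N (\<lambda>h. F (fst (h ! k)) (theta N mN c (map (fst \<circ> snd) h) (Suc k)))
       = expect (Suc k) (\<lambda>g. F (fst (g ! k)) (theta N mN c (map (fst \<circ> snd) g) (Suc k)))"
proof -
  have "expect N (\<lambda>h. F (fst (h ! k)) (theta N mN c (map (fst \<circ> snd) h) (Suc k)))
      = expect N (\<lambda>h. (\<lambda>g. F (fst (g ! k)) (theta N mN c (map (fst \<circ> snd) g) (Suc k))) (take (Suc k) h))"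
    by (rule expect_cong) (simp add: theta_take_history assms)
  also have "\<dots> = expect (Suc k) (\<lambda>g. F (fst (g ! k)) (theta N mN c (map (fst \<circ> snd) g) (Suc k)))"
    using assms by (intro expect_take) auto
  finally show ?thesis .
qed

lemma Upay_mu_st_eq_average: "Upay u (mu_st p m y N mN c \<sigma>) y = (\<Sum>k<N. stage_payoff u k) / real N"
proof -
  let ?th = "\<lambda>h k. theta N mN c (map (fst \<circ> snd) h) (Suc k)"
  have "Upay u (mu_st p m y N mN c \<sigma>) y
      = expect N (\<lambda>h. \<Sum>s\<in>UNIV. \<Sum>a\<in>UNIV. (\<Sum>k<N. if fst (h ! k) = s \<and> ?th h k = a then 1 else 0) / real N * mixed_payoff y u s a)"
    unfolding Upay_eq_mixed_payoff mu_st_eq_expect by (simp only: expect_mult_right expect_sum[symmetric])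
  also have "\<dots> = expect N (\<lambda>h. (\<Sum>k<N. mixed_payoff y u (fst (h ! k)) (?th h k)) / real N)"
  proof (rule expect_cong)
    fix h :: "('s \<times> 's \<times> 'b) list"
    have "(\<Sum>s\<in>UNIV. \<Sum>a\<in>UNIV. (\<Sum>k<N. if fst (h ! k) = s \<and> ?th h k = a then 1 else 0) * mixed_payoff y u s a)
        = (\<Sum>s\<in>UNIV. \<Sum>k<N. \<Sum>a\<in>UNIV. (if fst (h ! k) = s \<and> ?th h k = a then 1 else 0) * mixed_payoff y u s a)"
      by (simp add: sum_distrib_right, intro sum.cong refl, rule sum.swap)
    also have "\<dots> = (\<Sum>k<N. \<Sum>s\<in>UNIV. \<Sum>a\<in>UNIV. (if fst (h ! k) = s \<and> ?th h k = a then 1 else 0) * mixed_payoff y u s a)"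
      by (rule sum.swap)
    also have "\<dots> = (\<Sum>k<N. mixed_payoff y u (fst (h ! k)) (?th h k))"
      by (simp only: sum_delta_pair)
    finally show "(\<Sum>s\<in>UNIV. \<Sum>a\<in>UNIV. (\<Sum>k<N. if fst (h ! k) = s \<and> ?th h k = a then 1 else 0) / real N * mixed_payoff y u s a)
        = (\<Sum>k<N. mixed_payoff y u (fst (h ! k)) (?th h k)) / real N"
      by (simp add: sum_divide_distrib[symmetric] divide_simps)
  qed
  also have "\<dots> = (\<Sum>k<N. expect N (\<lambda>h. mixed_payoff y u (fst (h ! k)) (?th h k))) / real N"
    by (simp add: expect_sum expect_cmult divide_inverse mult.commute[of _ "inverse _"])
  also have "\<dots> = (\<Sum>k<N. stage_payoff u k) / real N"
    by (simp add: stage_payoff_def expect_stage[where F="mixed_payoff y u"])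
  finally show ?thesis .
qed

lemma disc_payoff1_eq_stage_payoffs: "disc_payoff1 p m y N mN c u \<delta> \<sigma> = (\<Sum>k<N. (1 - \<delta>) * \<delta> ^ k * stage_payoff u k)"
proof -
  have "disc_payoff1 p m y N mN c u \<delta> \<sigma> = (\<Sum>h\<in>plays N. \<Sum>k<N. weight N h * ((1 - \<delta>) * \<delta> ^ k * u (fst (h ! k)) (snd (snd (h ! k)))))"
    by (simp add: disc_payoff1_def hprob_eq_weight sum_distrib_left)
  also have "\<dots> = (\<Sum>k<N. \<Sum>h\<in>plays N. weight N h * ((1 - \<delta>) * \<delta> ^ k * u (fst (h ! k)) (snd (snd (h ! k)))))"
    by (rule sum.swap)
  also have "\<dots> = (\<Sum>k<N. (1 - \<delta>) * \<delta> ^ k * expect N (\<lambda>h. u (fst (h ! k)) (snd (snd (h ! k)))))"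
    by (simp add: expect_def sum_distrib_left mult_ac)
  also have "\<dots> = (\<Sum>k<N. (1 - \<delta>) * \<delta> ^ k * stage_payoff u k)"
  proof (rule sum.cong[OF refl])
    fix k assume "k \<in> {..<N}"
    then have k: "k < N" by simp
    have "expect N (\<lambda>h. u (fst (h ! k)) (snd (snd (h ! k)))) = expect N (\<lambda>h. (\<lambda>g. u (fst (g ! k)) (snd (snd (g ! k)))) (take (Suc k) h))"
      by (rule expect_cong) (use k in auto)
    also have "\<dots> = expect (Suc k) (\<lambda>g. u (fst (g ! k)) (snd (snd (g ! k))))"
      using k by (intro expect_take) auto
    also have "\<dots> = stage_payoff u k"
      unfolding stage_payoff_def mixed_payoff_def using k by (intro expect_action) auto
    finally show "(1 - \<delta>) * \<delta> ^ k * expect N (\<lambda>h. u (fst (h ! k)) (snd (snd (h ! k)))) = (1 - \<delta>) * \<delta> ^ k * stage_payoff u k"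
      by simp
  qed
  finally show ?thesis .
qed

lemma stage_payoff_bound: assumes "\<And>s b. \<bar>u s b\<bar> \<le> M" "k < N" shows "\<bar>stage_payoff u k\<bar> \<le> M"
  unfolding stage_payoff_def using assms by (intro expect_abs_bound mixed_payoff_bound[OF yd]) auto

lemma mu_st_nonneg: "0 \<le> mu_st p m y N mN c \<sigma> s a"
  unfolding mu_st_eq_expect expect_def by (intro sum_nonneg mult_nonneg_nonneg weight_nonneg divide_nonneg_nonneg sum_nonneg) auto

lemma mu_st_row_sum_eq_average:
  "(\<Sum>a\<in>UNIV. mu_st p m y N mN c \<sigma> s a) = (\<Sum>k<N. expect (Suc k) (\<lambda>g. if fst (g ! k) = s then 1 else 0)) / real N"
proof -
  have "(\<Sum>a\<in>UNIV. mu_st p m y N mN c \<sigma> s a) = expect N (\<lambda>h. (\<Sum>k<N. if fst (h ! k) = s then 1 else 0) / real N)"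
    unfolding mu_st_eq_expect expect_sum[symmetric]
  proof (rule expect_cong)
    fix h :: "('s \<times> 's \<times> 'b) list"
    have "(\<Sum>a\<in>UNIV. \<Sum>k<N. if fst (h ! k) = s \<and> theta N mN c (map (fst \<circ> snd) h) (Suc k) = a then 1 else 0)
       = (\<Sum>k<N. \<Sum>a\<in>UNIV. if fst (h ! k) = s \<and> theta N mN c (map (fst \<circ> snd) h) (Suc k) = a then 1 else (0::real))"
      by (rule sum.swap)
    then show "(\<Sum>a\<in>UNIV. (\<Sum>k<N. if fst (h ! k) = s \<and> theta N mN c (map (fst \<circ> snd) h) (Suc k) = a then 1 else 0) / real N)
      = (\<Sum>k<N. if fst (h ! k) = s then 1 else 0) / real N"
      by (simp add: sum_divide_distrib[symmetric] sum_indicator_conj_right)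
  qed
  also have "\<dots> = (\<Sum>k<N. expect N (\<lambda>h. (\<lambda>x a. if x = s then 1 else 0) (fst (h ! k)) (theta N mN c (map (fst \<circ> snd) h) (Suc k)))) / real N"
    by (simp add: expect_sum expect_cmult divide_inverse mult.commute[of _ "inverse _"])
  also have "\<dots> = (\<Sum>k<N. expect (Suc k) (\<lambda>g. if fst (g ! k) = s then 1 else 0)) / real N"
    by (intro arg_cong2[where f="(/)"] sum.cong refl) (subst expect_stage, auto)
  finally show ?thesis .
qed

lemma mu_st_row_sum:
  assumes "1 \<le> N"
  shows "(\<Sum>a\<in>UNIV. mu_st p m y N mN c \<sigma> s a) = m s"
proof -
  have "(\<Sum>k<N. expect (Suc k) (\<lambda>g. if fst (g ! k) = s then 1 else 0)) = (\<Sum>k<N. m s)"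
  proof (rule sum.cong[OF refl])
    fix k assume "k \<in> {..<N}"
    then have "expect (Suc k) (\<lambda>g. (\<lambda>t. if t = s then 1 else 0) (fst (g ! k))) = (\<Sum>t\<in>UNIV. m t * (if t = s then 1 else 0))"
      by (intro expect_state) auto
    then show "expect (Suc k) (\<lambda>g. if fst (g ! k) = s then 1 else 0) = m s" by (simp add: sum_delta_mult_right)
  qed
  then show ?thesis unfolding mu_st_row_sum_eq_average using assms by simp
qed

lemma mu_st_col_sum:
  assumes "1 \<le> N" "admissible_completion N mN c" "Defs.distr mN"
  shows "(\<Sum>s\<in>UNIV. mu_st p m y N mN c \<sigma> s a) = mN a"
proof -
  have "(\<Sum>s\<in>UNIV. mu_st p m y N mN c \<sigma> s a) = expect N (\<lambda>_. mN a)"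
    unfolding mu_st_eq_expect expect_sum[symmetric]
  proof (rule expect_cong)
    fix h :: "('s \<times> 's \<times> 'b) list" assume h: "h \<in> plays N"
    have "(\<Sum>s\<in>UNIV. \<Sum>k<N. if fst (h ! k) = s \<and> theta N mN c (map (fst \<circ> snd) h) (Suc k) = a then 1 else 0)
       = (\<Sum>k<N. \<Sum>s\<in>UNIV. if fst (h ! k) = s \<and> theta N mN c (map (fst \<circ> snd) h) (Suc k) = a then 1 else (0::real))"
      by (rule sum.swap)
    also have "\<dots> = (\<Sum>k<N. if theta N mN c (map (fst \<circ> snd) h) (Suc k) = a then 1 else 0)"
      by (simp add: sum_indicator_conj_left)
    also have "\<dots> = real N * mN a"
      using h assms by (intro sum_theta_indicator) (auto simp: plays_def)
    finally show "(\<Sum>s\<in>UNIV. (\<Sum>k<N. if fst (h ! k) = s \<and> theta N mN c (map (fst \<circ> snd) h) (Suc k) = a then 1 else 0) / real N)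
      = mN a"
      using assms(1) by (simp add: sum_divide_distrib[symmetric])
  qed
  also have "\<dots> = mN a" using assms(1) by (intro expect_const) auto
  finally show ?thesis .
qed

section \<open>Visit counts\<close>

definition visit :: "'s \<Rightarrow> nat \<Rightarrow> ('s \<times> 's \<times> 'b) list \<Rightarrow> real" where
  "visit s j g = (if fst (g ! j) = s then 1 else 0)"

definition visit_excess :: "'s \<Rightarrow> nat \<Rightarrow> ('s \<times> 's \<times> 'b) list \<Rightarrow> real" where
  "visit_excess s n g = (\<Sum>j<n. visit s j g - m s)"

lemma visit_take: "j < i \<Longrightarrow> visit s j (take i g) = visit s j g"
  by (simp add: visit_def)

lemma visit_excess_take: "n \<le> i \<Longrightarrow> visit_excess s n (take i g) = visit_excess s n g"
  unfolding visit_excess_def by (intro sum.cong refl) (simp add: visit_take)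

lemma expect_visit: "Suc n \<le> N \<Longrightarrow> expect (Suc n) (visit s n) = m s"
proof -
  assume a: "Suc n \<le> N"
  have "visit s n = (\<lambda>g. (\<lambda>t. if t = s then 1 else 0) (fst (g ! n)))" by (rule ext) (simp add: visit_def)
  then show ?thesis using expect_state[OF a, of "\<lambda>t. if t = s then 1 else 0"] by (simp add: sum_delta_mult_right)
qed

lemma expect_visit_earlier:
  assumes "j < n" "Suc n \<le> N"
  shows "expect (Suc n) (visit s j) = m s"
proof -
  have "expect (Suc n) (visit s j) = expect (Suc n) (\<lambda>g. visit s j (take (Suc j) g))"
    by (rule expect_cong) (simp add: visit_take)
  also have "\<dots> = expect (Suc j) (visit s j)" using assms by (intro expect_take) auto
  also have "\<dots> = m s" using assms by (intro expect_visit) auto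
  finally show ?thesis .
qed

lemma expect_visit_pair:
  assumes "j < n" "Suc n \<le> N"
  shows "expect (Suc n) (\<lambda>g. visit s j g * visit s n g) = m s * pn p (n - j) s s"
proof -
  have "expect (Suc n) (\<lambda>g. visit s j g * visit s n g)
      = expect (Suc n) (\<lambda>g. visit s j (take (Suc j) g) * (\<lambda>t. if t = s then 1 else 0) (fst (g ! n)))"
    by (rule expect_cong) (simp add: visit_take visit_def)
  also have "\<dots> = expect (Suc j) (\<lambda>g. visit s j g * (\<Sum>t\<in>UNIV. pn p (n - j) (fst (g ! j)) t * (if t = s then 1 else 0)))"
    using assms by (intro expect_pn) auto
  also have "\<dots> = expect (Suc j) (\<lambda>g. (\<lambda>r. (if r = s then 1 else 0) * pn p (n - j) r s) (fst (g ! j)))"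
    by (rule expect_cong) (simp add: visit_def sum_delta_mult_right)
  also have "\<dots> = (\<Sum>t\<in>UNIV. m t * ((if t = s then 1 else 0) * pn p (n - j) t s))"
    using assms by (intro expect_state) auto
  also have "\<dots> = (\<Sum>t\<in>UNIV. if t = s then m t * pn p (n - j) t s else 0)"
    by (rule sum.cong) auto
  also have "\<dots> = m s * pn p (n - j) s s" by simp
  finally show ?thesis .
qed

lemma expect_visit_cross:
  assumes "Suc n \<le> N"
  shows "expect (Suc n) (\<lambda>g. visit_excess s n g * (visit s n g - m s)) = (\<Sum>j<n. m s * pn p (n - j) s s - m s * m s)"
proof -
  have "expect (Suc n) (\<lambda>g. visit_excess s n g * (visit s n g - m s))
      = (\<Sum>j<n. expect (Suc n) (\<lambda>g. visit s j g * visit s n g) - m s * expect (Suc n) (visit s n)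
           - m s * expect (Suc n) (visit s j) + m s * m s)"
  proof -
    have "expect (Suc n) (\<lambda>g. visit_excess s n g * (visit s n g - m s))
       = expect (Suc n) (\<lambda>g. \<Sum>j<n. visit s j g * visit s n g - m s * visit s n g - m s * visit s j g + m s * m s)"
      by (rule expect_cong) (simp only: visit_excess_def sum_distrib_right, intro sum.cong refl, simp add: algebra_simps)
    also have "\<dots> = (\<Sum>j<n. expect (Suc n) (\<lambda>g. visit s j g * visit s n g - m s * visit s n g - m s * visit s j g + m s * m s))"
      by (rule expect_sum)
    also have "\<dots> = (\<Sum>j<n. expect (Suc n) (\<lambda>g. visit s j g * visit s n g) - m s * expect (Suc n) (visit s n)
           - m s * expect (Suc n) (visit s j) + m s * m s)"
      using assms by (intro sum.cong refl) (simp add: expect_add expect_diff expect_cmult expect_const)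
    finally show ?thesis .
  qed
  also have "\<dots> = (\<Sum>j<n. m s * pn p (n - j) s s - m s * m s)"
    using assms by (intro sum.cong refl) (simp add: expect_visit_pair expect_visit expect_visit_earlier)
  finally show ?thesis .
qed

lemma m_le_1: "m s \<le> 1"
  using m_distr member_le_sum[of s UNIV m] by (auto intro: m_distr)

lemma expect_visit_dev_sq_le_1:
  assumes "1 \<le> j" "j \<le> N"
  shows "expect j (\<lambda>g. (visit s k g - m s)\<^sup>2) \<le> 1"
proof -
  have "(visit s k g - m s)\<^sup>2 \<le> 1" for g
    using m_distr(1)[of s] m_le_1[of s]
    by (simp add: visit_def power2_eq_square) (smt (verit) mult_left_le_one_le mult_nonneg_nonneg)
  then have "expect j (\<lambda>g. (visit s k g - m s)\<^sup>2) \<le> expect j (\<lambda>_. 1)" by (intro expect_mono)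
  then show ?thesis using expect_const[OF assms] by simp
qed

lemma visit_cross_bound:
  assumes C: "\<forall>n s t. \<bar>\<Sum>d<n. pn p d s t - m t\<bar> \<le> C"
  shows "\<bar>\<Sum>j<n. m s * pn p (n - j) s s - m s * m s\<bar> \<le> C + 1"
proof -
  have m1: "0 \<le> m s" "m s \<le> 1" using m_distr(1) m_le_1 .
  have "(\<Sum>j<n. pn p (n - j) s s - m s) = (\<Sum>j<n. pn p (Suc (n - Suc j)) s s - m s)"
    by (intro sum.cong refl) (simp add: Suc_diff_Suc)
  also have "\<dots> = (\<Sum>j<n. pn p (Suc j) s s - m s)"
    by (rule sum.nat_diff_reindex[where g="\<lambda>i. pn p (Suc i) s s - m s"])
  also have "\<dots> = (\<Sum>d<Suc n. pn p d s s - m s) - (pn p 0 s s - m s)"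
    by (subst sum.lessThan_Suc_shift, simp del: pn.simps)
  finally have e: "(\<Sum>j<n. pn p (n - j) s s - m s) = (\<Sum>d<Suc n. pn p d s s - m s) - (1 - m s)" by simp
  have "\<bar>\<Sum>d<Suc n. pn p d s s - m s\<bar> \<le> C" using C by blast
  then have "\<bar>\<Sum>j<n. pn p (n - j) s s - m s\<bar> \<le> C + 1" unfolding e using m1 by linarith
  moreover have "(\<Sum>j<n. m s * pn p (n - j) s s - m s * m s) = m s * (\<Sum>j<n. pn p (n - j) s s - m s)"
    by (simp add: sum_distrib_left right_diff_distrib)
  ultimately show ?thesis using m1
    by (simp add: abs_mult) (smt (verit) mult_left_le_one_le abs_ge_zero)
qed

text \<open>The second moment of the excess grows linearly: the excess after \<open>n + 1\<close> stages is
  \<open>Z + X\<close> with \<open>X = visit s n - m s\<close>, and the cross term \<open>E[Z X]\<close> is \<open>m(s)\<close> times a Cesaro sum of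
  \<open>p\<^sup>d(s, s) - m(s)\<close>.\<close>

lemma expect_visit_excess_sq_le:
  assumes C: "\<forall>n s t. \<bar>\<Sum>d<n. pn p d s t - m t\<bar> \<le> C" and n: "1 \<le> n" "n \<le> N"
  shows "expect n (\<lambda>g. (visit_excess s n g)\<^sup>2) \<le> (2 * C + 3) * real n"
  using n
proof (induction n rule: dec_induct)
  case base
  have "0 \<le> C" using C by (meson abs_ge_zero order_trans)
  moreover have "expect 1 (\<lambda>g. (visit_excess s 1 g)\<^sup>2) \<le> 1"
    using expect_visit_dev_sq_le_1[OF _ base] by (simp add: visit_excess_def)
  ultimately show ?case by simp
next
  case (step n)
  have n1: "1 \<le> n" "Suc n \<le> N" using step by auto
  have "expect (Suc n) (\<lambda>g. (visit_excess s (Suc n) g)\<^sup>2)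
      = expect (Suc n) (\<lambda>g. (visit_excess s n (take n g))\<^sup>2
          + 2 * (visit_excess s n g * (visit s n g - m s)) + (visit s n g - m s)\<^sup>2)"
    by (rule expect_cong) (simp only: visit_excess_take[OF le_refl],
        simp add: visit_excess_def power2_eq_square algebra_simps)
  also have "\<dots> = expect n (\<lambda>g. (visit_excess s n g)\<^sup>2)
      + 2 * expect (Suc n) (\<lambda>g. visit_excess s n g * (visit s n g - m s))
      + expect (Suc n) (\<lambda>g. (visit s n g - m s)\<^sup>2)"
    using n1 by (simp add: expect_add expect_cmult expect_take[where F="\<lambda>g. (visit_excess s n g)\<^sup>2"])
  also have "\<dots> \<le> (2 * C + 3) * real n + 2 * (C + 1) + 1"
  proof -
    have "expect (Suc n) (\<lambda>g. visit_excess s n g * (visit s n g - m s)) \<le> C + 1"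
      using expect_visit_cross[OF n1(2), of s] visit_cross_bound[OF C, where n=n and s=s] by simp
    moreover have "expect (Suc n) (\<lambda>g. (visit s n g - m s)\<^sup>2) \<le> 1"
      using n1 by (intro expect_visit_dev_sq_le_1) auto
    ultimately show ?thesis using step.IH n1 by simp
  qed
  also have "\<dots> = (2 * C + 3) * real (Suc n)" by (simp add: algebra_simps)
  finally show ?case .
qed

section \<open>The loss from telling the truth\<close>

lemma truthful_announcements:
  assumes "\<sigma> = truthful" "weight j g \<noteq> 0" "length g = j"
  shows "map (fst \<circ> snd) g = map fst g"
proof (rule nth_equalityI)
  fix k assume "k < length (map (fst \<circ> snd) g)"
  then have k: "k < j" using assms(3) by simp
  have "(\<Prod>k<j. \<sigma> (take k g) (map fst g ! k) (map (fst \<circ> snd) g ! k) *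
        y (theta N mN c (map (fst \<circ> snd) g) (Suc k)) (map (snd \<circ> snd) g ! k)) \<noteq> 0"
    using assms(2) by (auto simp: weight_def Let_def)
  then have "\<sigma> (take k g) (map fst g ! k) (map (fst \<circ> snd) g ! k) \<noteq> 0"
    using k by (simp add: prod_zero_iff)
  then show "map (fst \<circ> snd) g ! k = map fst g ! k"
    using assms(1) by (simp add: truthful_def split: if_splits)
qed simp

lemma Upay_mu0_minus_Upay_mu_st:
  assumes N1: "1 \<le> N"
  shows "Upay u (mu0 m) y - Upay u (mu_st p m y N mN c \<sigma>) y
    = expect N (\<lambda>h. \<Sum>k<N. mixed_payoff y u (fst (h ! k)) (fst (h ! k))
        - mixed_payoff y u (fst (h ! k)) (theta N mN c (map (fst \<circ> snd) h) (Suc k))) / real N"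
proof -
  let ?th = "\<lambda>h k. theta N mN c (map (fst \<circ> snd) h) (Suc k)"
  have diag: "expect N (\<lambda>h. mixed_payoff y u (fst (h ! k)) (fst (h ! k))) = (\<Sum>s\<in>UNIV. m s * mixed_payoff y u s s)"
    if k: "k < N" for k
  proof -
    have "expect N (\<lambda>h. (\<lambda>x a. mixed_payoff y u x x) (fst (h ! k)) (?th h k))
        = expect (Suc k) (\<lambda>g. (\<lambda>x a. mixed_payoff y u x x) (fst (g ! k)) (?th g k))"
      using k by (rule expect_stage)
    also have "\<dots> = (\<Sum>s\<in>UNIV. m s * mixed_payoff y u s s)"
      using k by (intro expect_state[where f="\<lambda>t. mixed_payoff y u t t"]) auto
    finally show ?thesis by simp
  qed
  have off: "expect N (\<lambda>h. mixed_payoff y u (fst (h ! k)) (?th h k)) = stage_payoff u k" if "k < N" for k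
    unfolding stage_payoff_def using that by (rule expect_stage)
  have "Upay u (mu0 m) y - Upay u (mu_st p m y N mN c \<sigma>) y
      = (\<Sum>k<N. expect N (\<lambda>h. mixed_payoff y u (fst (h ! k)) (fst (h ! k)))
          - expect N (\<lambda>h. mixed_payoff y u (fst (h ! k)) (?th h k))) / real N"
    using N1 by (simp add: Upay_mu0 Upay_mu_st_eq_average diag off sum_subtractf diff_divide_distrib)
  then show ?thesis by (simp add: expect_sum expect_diff)
qed

text \<open>Chebyshev's inequality for the number of visits to \<open>s\<close> in the first \<open>n\<^sub>0\<close> stages,
  which exceeds its mean \<open>n\<^sub>0 m(s)\<close> by at least \<open>\<lambda>\<close> if the quota is exceeded.\<close>

lemma expect_exceeds_quota_le:
  assumes C: "\<forall>n s t. \<bar>\<Sum>d<n. pn p d s t - m t\<bar> \<le> C" and n0: "1 \<le> n0" "n0 \<le> N"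
    and lam: "0 < lam" "lam \<le> real N * mN s - real n0 * m s"
  shows "expect N (\<lambda>h. if exceeds_quota N mN (take n0 (map fst h)) s then 1 else 0)
    \<le> (2 * C + 3) * real n0 / lam\<^sup>2"
proof -
  have "expect N (\<lambda>h. if exceeds_quota N mN (take n0 (map fst h)) s then 1 else 0)
      = expect n0 (\<lambda>g. if exceeds_quota N mN (map fst g) s then 1 else 0)"
    using n0 expect_take[where F="\<lambda>g. if exceeds_quota N mN (map fst g) s then 1 else 0"]
    by (simp add: take_map)
  also have "\<dots> \<le> expect n0 (\<lambda>g. (visit_excess s n0 g)\<^sup>2 / lam\<^sup>2)"
  proof (rule expect_mono)
    fix g :: "('s \<times> 's \<times> 'b) list" assume g: "g \<in> plays n0"
    then have cnt: "real (count_list (map fst g) s) = visit_excess s n0 g + real n0 * m s"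
      using count_list_take_eq_sum[of n0 "map fst g" s]
      by (simp add: plays_def visit_excess_def visit_def sum_subtractf)
    show "(if exceeds_quota N mN (map fst g) s then 1 else 0) \<le> (visit_excess s n0 g)\<^sup>2 / lam\<^sup>2"
    proof (cases "exceeds_quota N mN (map fst g) s")
      case True
      then have "lam \<le> visit_excess s n0 g" using cnt lam(2) by (simp add: exceeds_quota_def)
      then have "lam\<^sup>2 \<le> (visit_excess s n0 g)\<^sup>2" using lam(1) by (intro power_mono) auto
      then show ?thesis using True lam(1) by simp
    qed simp
  qed
  also have "\<dots> = expect n0 (\<lambda>g. (visit_excess s n0 g)\<^sup>2) / lam\<^sup>2"
    by (simp add: divide_inverse expect_cmult mult.commute[of _ "inverse _"])
  also have "\<dots> \<le> (2 * C + 3) * real n0 / lam\<^sup>2"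
    using expect_visit_excess_sq_le[OF C n0] by (intro divide_right_mono) auto
  finally show ?thesis .
qed

lemma truthful_gap:
  assumes sT: "\<sigma> = truthful" and n0: "1 \<le> n0" "n0 \<le> N"
    and Mb: "\<And>s b. \<bar>u s b\<bar> \<le> M"
    and C: "\<forall>n s t. \<bar>\<Sum>d<n. pn p d s t - m t\<bar> \<le> C"
    and lam: "\<And>s. 0 < lam s" "\<And>s. lam s \<le> real N * mN s - real n0 * m s"
  shows "Upay u (mu0 m) y - Upay u (mu_st p m y N mN c \<sigma>) y
     \<le> 2 * M / real N * (real (N - n0) + real N * (\<Sum>s\<in>UNIV. (2 * C + 3) * real n0 / (lam s)\<^sup>2))"
proof -
  let ?E = "\<lambda>h. \<Sum>s\<in>UNIV. if exceeds_quota N mN (take n0 (map fst h)) s then 1 else (0::real)"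
  have M0: "0 \<le> M" using Mb[of undefined undefined] by simp
  have "Upay u (mu0 m) y - Upay u (mu_st p m y N mN c \<sigma>) y
      \<le> expect N (\<lambda>h. 2 * M * (real (N - n0) + real N * ?E h)) / real N"
    unfolding Upay_mu0_minus_Upay_mu_st[OF order_trans[OF n0]]
  proof (intro divide_right_mono expect_mono_support)
    fix h :: "('s \<times> 's \<times> 'b) list" assume h: "h \<in> plays N" "weight N h \<noteq> 0"
    then have len: "length h = N" by (simp add: plays_def)
    have "(\<Sum>k<N. mixed_payoff y u (map fst h ! k) (map fst h ! k)
        - mixed_payoff y u (map fst h ! k) (theta N mN c (map fst h) (Suc k)))
      \<le> 2 * M * (real (N - n0) + real N * ?E h)"
      by (rule truthful_loss_le) (use len n0(2) mixed_payoff_bound[of y u M, OF yd Mb] in auto)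
    then show "(\<Sum>k<N. mixed_payoff y u (fst (h ! k)) (fst (h ! k))
        - mixed_payoff y u (fst (h ! k)) (theta N mN c (map (fst \<circ> snd) h) (Suc k)))
      \<le> 2 * M * (real (N - n0) + real N * ?E h)"
      using len unfolding truthful_announcements[OF sT h(2) len] by simp
  qed simp
  also have "\<dots> = 2 * M / real N * (real (N - n0) + real N * (\<Sum>s\<in>UNIV.
      expect N (\<lambda>h. if exceeds_quota N mN (take n0 (map fst h)) s then 1 else 0)))"
    using n0 by (simp add: expect_cmult expect_add expect_sum expect_const)
  also have "\<dots> \<le> 2 * M / real N * (real (N - n0) + real N * (\<Sum>s\<in>UNIV. (2 * C + 3) * real n0 / (lam s)\<^sup>2))"
    using M0 expect_exceeds_quota_le[OF C n0 lam(1) lam(2)]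
    by (intro mult_left_mono add_left_mono sum_mono) auto
  finally show ?thesis .
qed


lemma mu_st_near_Mset:
  assumes N1: "1 \<le> N" and adm: "admissible_completion N mN c" and grid: "closest_grid N m mN"
    and \<rho>: "2 * real CARD('s) / real N \<le> \<rho>"
  shows "near_Mset m \<rho> (mu_st p m y N mN c \<sigma>)"
proof -
  have "Defs.distr m" using im by (simp add: invariant_measure_def)
  moreover have "Defs.distr mN" using grid by (simp add: closest_grid_def grid_distr_def)
  ultimately show ?thesis
    using mu_st_col_sum[OF N1 adm] closest_grid_bound[OF _ N1 grid] \<rho> mu_st_nonneg mu_st_row_sum[OF N1]
    by (simp add: near_Mset_def)
qed

text \<open>The truthful gap with the quota checked at stage \<open>n\<^sub>0 \<approx> (1 - \<gamma>) N\<close>, where each quota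
  \<open>N m\<^sub>N(s)\<close> exceeds the mean number \<open>n\<^sub>0 m(s)\<close> of visits by \<open>\<lambda>(s) = \<gamma> N m(s) / 2\<close>.\<close>

lemma truthful_gap_fraction:
  assumes sT: "\<sigma> = truthful" and \<gamma>: "0 < \<gamma>" "\<gamma> \<le> 1/2" and N2: "2 \<le> real N"
    and Mb: "\<And>s b. \<bar>u s b\<bar> \<le> M"
    and C: "\<forall>n s t. \<bar>\<Sum>d<n. pn p d s t - m t\<bar> \<le> C" and mpos: "\<And>s. 0 < m s"
    and grid: "\<And>s. \<bar>mN s - m s\<bar> \<le> 2 * real CARD('s) / real N"
    and large: "\<And>s. 4 * real CARD('s) \<le> \<gamma> * real N * m s"
  shows "Upay u (mu0 m) y - Upay u (mu_st p m y N mN c \<sigma>) y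
    \<le> 2 * M * \<gamma> + 2 * M * (1 + (\<Sum>s\<in>UNIV. 4 * (2 * C + 3) / (\<gamma>\<^sup>2 * (m s)\<^sup>2))) / real N"
proof -
  define Q where "Q = (\<Sum>s\<in>UNIV. 4 * (2 * C + 3) / (\<gamma>\<^sup>2 * (m s)\<^sup>2))"
  define n0 where "n0 = nat \<lfloor>(1 - \<gamma>) * real N\<rfloor>"
  define lam where "lam s = \<gamma> * real N * m s / 2" for s
  have M0: "0 \<le> M" using Mb[of undefined undefined] by simp
  have C0: "0 \<le> C" using C by (meson abs_ge_zero order_trans)
  have n0u: "real n0 \<le> (1 - \<gamma>) * real N" using \<gamma>(2) N2 unfolding n0_def by simp
  have n0l: "(1 - \<gamma>) * real N - 1 < real n0" using \<gamma>(2) N2 unfolding n0_def by linarith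
  have n01: "1 \<le> n0"
  proof -
    have "1/2 * real N \<le> (1 - \<gamma>) * real N" using \<gamma>(2) N2 by (intro mult_right_mono) auto
    then show ?thesis using N2 unfolding n0_def by linarith
  qed
  have "(1 - \<gamma>) * real N \<le> real N" using \<gamma>(1) N2 by (simp add: algebra_simps)
  then have n0N: "n0 \<le> N" using n0u by linarith
  have tail: "real (N - n0) \<le> \<gamma> * real N + 1" using n0l n0N by (simp add: of_nat_diff algebra_simps)
  have lam0: "0 < lam s" for s using \<gamma>(1) N2 mpos[of s] by (simp add: lam_def)
  have slack: "lam s \<le> real N * mN s - real n0 * m s" for s
    unfolding lam_def using quota_slack[OF grid n0u large] N2 mpos[of s] by simp
  have "real N * (\<Sum>s\<in>UNIV. (2 * C + 3) * real n0 / (lam s)\<^sup>2)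
      \<le> real N * (\<Sum>s\<in>UNIV. (2 * C + 3) * real N / (lam s)\<^sup>2)"
    using n0N C0 N2 by (intro mult_left_mono sum_mono divide_right_mono) auto
  also have "\<dots> = Q"
    unfolding Q_def sum_distrib_left
  proof (rule sum.cong[OF refl])
    fix s
    have "m s \<noteq> 0" "real N \<noteq> 0" "\<gamma> \<noteq> 0" using mpos[of s] N2 \<gamma>(1) by auto
    then show "real N * ((2 * C + 3) * real N / (lam s)\<^sup>2) = 4 * (2 * C + 3) / (\<gamma>\<^sup>2 * (m s)\<^sup>2)"
      by (simp add: lam_def power2_eq_square field_simps)
  qed
  finally have visits: "real N * (\<Sum>s\<in>UNIV. (2 * C + 3) * real n0 / (lam s)\<^sup>2) \<le> Q" .
  have "Upay u (mu0 m) y - Upay u (mu_st p m y N mN c \<sigma>) y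
      \<le> 2 * M / real N * (real (N - n0) + real N * (\<Sum>s\<in>UNIV. (2 * C + 3) * real n0 / (lam s)\<^sup>2))"
    by (rule truthful_gap[OF sT n01 n0N Mb C lam0 slack])
  also have "\<dots> \<le> 2 * M / real N * (\<gamma> * real N + 1 + Q)"
    using tail visits M0 N2 by (intro mult_left_mono) auto
  also have "\<dots> = 2 * M * \<gamma> + 2 * M * (1 + Q) / real N" using N2 by (simp add: field_simps)
  finally show ?thesis unfolding Q_def .
qed

end

section \<open>Truth-telling in long games\<close>

lemma truthful_nearly_optimal:
  fixes p :: "'s::finite \<Rightarrow> 's \<Rightarrow> real" and u :: "'s \<Rightarrow> 'b::finite \<Rightarrow> real"
  assumes st: "stochastic p" and irr: "irreducible_chain p" and im: "invariant_measure p m"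
    and yd: "cond_distr y" and \<kappa>: "0 < \<kappa>"
    and mN: "\<forall>N\<ge>1. closest_grid N m (mN N)" and c: "\<forall>N\<ge>1. admissible_completion N (mN N) (c N)"
  shows "\<exists>N0. \<forall>N\<ge>N0. Upay u (mu0 m) y - Upay u (mu_st p m y N (mN N) (c N) truthful) y \<le> \<kappa>"
proof -
  define M where "M = Max (range (\<lambda>x. \<bar>case_prod u x\<bar>))"
  have Mb: "\<bar>u s b\<bar> \<le> M" for s b using abs_le_Max_range[of "case_prod u" "(s, b)"] by (simp add: M_def)
  have M0: "0 \<le> M" using Mb[of undefined undefined] by simp
  obtain C where C: "\<forall>n s t. \<bar>\<Sum>d<n. pn p d s t - m t\<bar> \<le> C"
    using pn_partial_sums_deviation_bounded[OF st irr im] by blast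
  have mpos: "\<And>s. 0 < m s" using invariant_measure_pos[OF st irr im] .
  have md: "Defs.distr m" using im by (simp add: invariant_measure_def)
  define mmin where "mmin = Min (range m)"
  have mmin0: "0 < mmin" unfolding mmin_def using mpos by (subst Min_gr_iff) auto
  have mmin_le: "mmin \<le> m s" for s unfolding mmin_def by (rule Min_le) auto
  define \<gamma> where "\<gamma> = min (1/2) (\<kappa> / (4 * (M + 1)))"
  have \<gamma>: "0 < \<gamma>" "\<gamma> \<le> 1/2" using \<kappa> M0 unfolding \<gamma>_def by (auto simp: min_def)
  have \<gamma>\<kappa>: "2 * M * \<gamma> \<le> \<kappa> / 2"
  proof -
    have "2 * M * \<gamma> \<le> 2 * M * (\<kappa> / (4 * (M + 1)))" unfolding \<gamma>_def using M0 by (intro mult_left_mono) auto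
    also have "\<dots> \<le> \<kappa> / 2" using M0 \<kappa> by (simp add: field_simps)
    finally show ?thesis .
  qed
  define Q where "Q = (\<Sum>s\<in>UNIV. 4 * (2 * C + 3) / (\<gamma>\<^sup>2 * (m s)\<^sup>2))"
  define B where "B = 2 + 4 * real CARD('s) / (\<gamma> * mmin) + 4 * M * (1 + Q) / \<kappa>"
  have "0 \<le> C" using C by (meson abs_ge_zero order_trans)
  then have Q0: "0 \<le> Q" unfolding Q_def by (intro sum_nonneg) auto
  have "Upay u (mu0 m) y - Upay u (mu_st p m y N (mN N) (c N) truthful) y \<le> \<kappa>" if NB: "B \<le> real N" for N
  proof -
    have B_ge: "2 \<le> B" "4 * real CARD('s) / (\<gamma> * mmin) \<le> B" "4 * M * (1 + Q) / \<kappa> \<le> B"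
      using \<gamma> mmin0 M0 Q0 \<kappa> by (auto simp: B_def)
    have N2: "2 \<le> real N" using NB B_ge by linarith
    then have N1: "1 \<le> N" by simp
    interpret sender_play p m y N "mN N" "c N" truthful
      using st im yd truthful_strategy by unfold_locales
    have "closest_grid N m (mN N)" using mN N1 by blast
    then have grid: "\<bar>mN N s - m s\<bar> \<le> 2 * real CARD('s) / real N" for s
      by (intro order_trans[OF member_le_sum closest_grid_bound[OF md N1]]) auto
    have large: "4 * real CARD('s) \<le> \<gamma> * real N * m s" for s
    proof -
      have "4 * real CARD('s) / (\<gamma> * mmin) \<le> real N" using NB B_ge by linarith
      then have "4 * real CARD('s) \<le> real N * (\<gamma> * mmin)" using \<gamma> mmin0 by (simp add: field_simps)
      also have "\<dots> \<le> real N * (\<gamma> * m s)" using mmin_le[of s] \<gamma> N2 by (simp add: mult_left_mono)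
      finally show ?thesis by (simp add: mult_ac)
    qed
    have "4 * M * (1 + Q) / \<kappa> \<le> real N" using NB B_ge by linarith
    then have "2 * M * (1 + Q) / real N \<le> \<kappa> / 2" using \<kappa> N2 by (simp add: field_simps)
    then show ?thesis
      using truthful_gap_fraction[where u=u and M=M, OF refl \<gamma> N2 Mb C mpos grid large] \<gamma>\<kappa> unfolding Q_def by linarith
  qed
  moreover have "B \<le> real N" if "nat \<lceil>B\<rceil> \<le> N" for N using that by linarith
  ultimately show ?thesis by blast
qed

section \<open>Discounting\<close>

text \<open>The normalised discount weights \<open>\<delta>\<^sup>k / \<Sum>\<^sub>j\<^sub><\<^sub>N \<delta>\<^sup>j\<close> depend continuously on \<open>\<delta>\<close>
  and all equal \<open>1/N\<close> at \<open>\<delta> = 1\<close>.\<close>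

lemma discounted_average_approx:
  assumes N1: "1 \<le> N" and k0: "0 < \<kappa>" and M0: "0 \<le> M"
  shows "\<exists>\<delta>0<1. \<forall>\<delta>. \<delta>0 \<le> \<delta> \<and> 0 < \<delta> \<and> \<delta> < 1 \<longrightarrow> (\<forall>G. (\<forall>k<N. \<bar>G k\<bar> \<le> M) \<longrightarrow>
      \<bar>(\<Sum>k<N. (1 - \<delta>) * \<delta> ^ k * G k) / (1 - \<delta> ^ N) - (\<Sum>k<N. G k) / real N\<bar> \<le> \<kappa>)"
proof -
  define h where "h x = (\<Sum>k<N. \<bar>x ^ k / (\<Sum>j<N. x ^ j) - 1 / real N\<bar>)" for x :: real
  have h1: "h 1 = 0" by (simp add: h_def)
  have "isCont h 1"
    unfolding h_def using N1 by (intro continuous_intros) auto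
  then have "(h \<longlongrightarrow> 0) (at 1)" using h1 by (simp add: isCont_def)
  then have "(h \<longlongrightarrow> 0) (at_left 1)" by (rule tendsto_mono[rotated]) (simp add: at_le)
  then have "eventually (\<lambda>x. h x < \<kappa> / (M + 1)) (at_left 1)"
    using k0 M0 by (intro order_tendstoD(2)) auto
  then obtain b where b: "b < 1" "\<And>x. b < x \<Longrightarrow> x < 1 \<Longrightarrow> h x < \<kappa> / (M + 1)"
    using eventually_at_left[of 0 "1::real"] by auto
  show ?thesis
  proof (intro exI[of _ "(b + 1) / 2"] conjI allI impI)
    show "(b + 1) / 2 < 1" using b by simp
    fix \<delta> :: real and G :: "nat \<Rightarrow> real"
    assume d: "(b + 1) / 2 \<le> \<delta> \<and> 0 < \<delta> \<and> \<delta> < 1" and G: "\<forall>k<N. \<bar>G k\<bar> \<le> M"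
    have hd: "h \<delta> < \<kappa> / (M + 1)" using b d by (intro b(2)) auto
    define S where "S = (\<Sum>j<N. \<delta> ^ j)"
    have S1: "1 \<le> S"
    proof -
      have "\<delta> ^ 0 \<le> S" unfolding S_def by (rule member_le_sum) (use N1 d in auto)
      then show ?thesis by simp
    qed
    have den: "1 - \<delta> ^ N = (1 - \<delta>) * S" by (simp add: S_def one_diff_power_eq)
    have "(\<Sum>k<N. (1 - \<delta>) * \<delta> ^ k * G k) / (1 - \<delta> ^ N) - (\<Sum>k<N. G k) / real N
        = (\<Sum>k<N. (\<delta> ^ k / S - 1 / real N) * G k)"
    proof -
      have "(\<Sum>k<N. (1 - \<delta>) * \<delta> ^ k * G k) = (1 - \<delta>) * (\<Sum>k<N. \<delta> ^ k * G k)"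
        by (simp add: sum_distrib_left mult.assoc)
      then have "(\<Sum>k<N. (1 - \<delta>) * \<delta> ^ k * G k) / (1 - \<delta> ^ N) = (\<Sum>k<N. \<delta> ^ k * G k) / S"
        unfolding den using d S1 by simp
      moreover have "(\<Sum>k<N. \<delta> ^ k * G k) / S - (\<Sum>k<N. G k) / real N = (\<Sum>k<N. (\<delta> ^ k / S - 1 / real N) * G k)"
        by (simp add: sum_divide_distrib sum_subtractf left_diff_distrib)
      ultimately show ?thesis by simp
    qed
    also have "\<bar>\<dots>\<bar> \<le> (\<Sum>k<N. \<bar>\<delta> ^ k / S - 1 / real N\<bar> * M)"
      by (rule order_trans[OF sum_abs], intro sum_mono) (use G in \<open>simp add: abs_mult mult_left_mono\<close>)
    also have "\<dots> = h \<delta> * M" by (simp add: h_def S_def sum_distrib_right)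
    also have "\<dots> \<le> \<kappa> / (M + 1) * M" using hd M0 by (intro mult_right_mono) auto
    also have "\<dots> \<le> \<kappa>" using k0 M0 by (simp add: field_simps)
    finally show "\<bar>(\<Sum>k<N. (1 - \<delta>) * \<delta> ^ k * G k) / (1 - \<delta> ^ N) - (\<Sum>k<N. G k) / real N\<bar> \<le> \<kappa>" .
  qed
qed

lemma best_reply_nearly_optimal:
  fixes p :: "'s::finite \<Rightarrow> 's \<Rightarrow> real" and u :: "'s \<Rightarrow> 'b::finite \<Rightarrow> real"
  assumes st: "stochastic p" and im: "invariant_measure p m" and yd: "cond_distr y"
    and N1: "1 \<le> N" and \<kappa>: "0 < \<kappa>"
  shows "\<exists>\<delta>0<1. \<forall>\<delta> \<sigma> \<sigma>0. \<delta>0 \<le> \<delta> \<and> 0 < \<delta> \<and> \<delta> < 1 \<and> sender_strategy \<sigma> \<and> best_reply p m y N mN c u \<delta> \<sigma>0 \<longrightarrow>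
    Upay u (mu_st p m y N mN c \<sigma>) y \<le> Upay u (mu_st p m y N mN c \<sigma>0) y + \<kappa>"
proof -
  define M where "M = Max (range (\<lambda>x. \<bar>case_prod u x\<bar>))"
  have Mb: "\<bar>u s b\<bar> \<le> M" for s b using abs_le_Max_range[of "case_prod u" "(s, b)"] by (simp add: M_def)
  have M0: "0 \<le> M" using Mb[of undefined undefined] by simp
  obtain \<delta>0 where \<delta>0: "\<delta>0 < 1" and approx: "\<And>\<delta> G. \<delta>0 \<le> \<delta> \<and> 0 < \<delta> \<and> \<delta> < 1 \<Longrightarrow> \<forall>k<N. \<bar>G k\<bar> \<le> M \<Longrightarrow>
      \<bar>(\<Sum>k<N. (1 - \<delta>) * \<delta> ^ k * G k) / (1 - \<delta> ^ N) - (\<Sum>k<N. G k) / real N\<bar> \<le> \<kappa> / 2"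
    using discounted_average_approx[OF N1 _ M0, of "\<kappa> / 2"] \<kappa> by auto
  have "Upay u (mu_st p m y N mN c \<sigma>) y \<le> Upay u (mu_st p m y N mN c \<sigma>0) y + \<kappa>"
    if \<delta>: "\<delta>0 \<le> \<delta> \<and> 0 < \<delta> \<and> \<delta> < 1" and \<sigma>: "sender_strategy \<sigma>"
      and br: "best_reply p m y N mN c u \<delta> \<sigma>0" for \<delta> \<sigma> \<sigma>0
  proof -
    interpret s: sender_play p m y N mN c \<sigma> using st im yd \<sigma> by unfold_locales
    have \<sigma>0: "sender_strategy \<sigma>0" using br by (simp add: best_reply_def)
    interpret s0: sender_play p m y N mN c \<sigma>0 using st im yd \<sigma>0 by unfold_locales
    have "0 < 1 - \<delta> ^ N" using \<delta> N1 by (simp add: power_less_one_iff)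
    moreover have "disc_payoff1 p m y N mN c u \<delta> \<sigma> \<le> disc_payoff1 p m y N mN c u \<delta> \<sigma>0"
      using br \<sigma> by (simp add: best_reply_def)
    ultimately have "(\<Sum>k<N. (1 - \<delta>) * \<delta> ^ k * s.stage_payoff u k) / (1 - \<delta> ^ N)
        \<le> (\<Sum>k<N. (1 - \<delta>) * \<delta> ^ k * s0.stage_payoff u k) / (1 - \<delta> ^ N)"
      unfolding s.disc_payoff1_eq_stage_payoffs s0.disc_payoff1_eq_stage_payoffs
      by (intro divide_right_mono) auto
    moreover have "\<bar>(\<Sum>k<N. (1 - \<delta>) * \<delta> ^ k * s.stage_payoff u k) / (1 - \<delta> ^ N)
        - (\<Sum>k<N. s.stage_payoff u k) / real N\<bar> \<le> \<kappa> / 2"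
      by (rule approx[OF \<delta>]) (intro allI impI s.stage_payoff_bound[OF Mb])
    moreover have "\<bar>(\<Sum>k<N. (1 - \<delta>) * \<delta> ^ k * s0.stage_payoff u k) / (1 - \<delta> ^ N)
        - (\<Sum>k<N. s0.stage_payoff u k) / real N\<bar> \<le> \<kappa> / 2"
      by (rule approx[OF \<delta>]) (intro allI impI s0.stage_payoff_bound[OF Mb])
    ultimately show ?thesis
      unfolding s.Upay_mu_st_eq_average s0.Upay_mu_st_eq_average abs_le_iff by linarith
  qed
  then show ?thesis using \<delta>0 by blast
qed

lemma best_reply_frequency_near_mu0:
  fixes p :: "'s::finite \<Rightarrow> 's \<Rightarrow> real" and u :: "'s \<Rightarrow> 'b::finite \<Rightarrow> real"
  assumes st: "stochastic p" and im: "invariant_measure p m" and yd: "cond_distr y"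
    and N1: "1 \<le> N" and adm: "admissible_completion N mN c" and grid: "closest_grid N m mN"
    and col: "2 * real CARD('s) / real N \<le> \<rho>" and \<kappa>: "0 < \<kappa>"
    and near: "\<And>\<mu>. near_Mset m \<rho> \<mu> \<Longrightarrow> Upay u (mu0 m) y - Upay u \<mu> y \<le> \<kappa> \<Longrightarrow> l1dist \<mu> (mu0 m) < \<eta>"
    and truthful: "Upay u (mu0 m) y - Upay u (mu_st p m y N mN c truthful) y \<le> \<kappa> / 2"
  shows "\<exists>\<delta>0<1. \<forall>\<delta>. \<delta>0 \<le> \<delta> \<and> 0 < \<delta> \<and> \<delta> < 1 \<longrightarrow>
    (\<forall>\<sigma>0. best_reply p m y N mN c u \<delta> \<sigma>0 \<longrightarrow> l1dist (mu_st p m y N mN c \<sigma>0) (mu0 m) < \<eta>)"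
proof -
  obtain \<delta>0 where "\<delta>0 < 1" and best: "\<forall>\<delta> \<sigma> \<sigma>0. \<delta>0 \<le> \<delta> \<and> 0 < \<delta> \<and> \<delta> < 1 \<and> sender_strategy \<sigma>
      \<and> best_reply p m y N mN c u \<delta> \<sigma>0 \<longrightarrow>
      Upay u (mu_st p m y N mN c \<sigma>) y \<le> Upay u (mu_st p m y N mN c \<sigma>0) y + \<kappa> / 2"
    using best_reply_nearly_optimal[OF st im yd N1, where \<kappa>="\<kappa> / 2" and mN=mN and c=c and u=u] \<kappa>
    by auto
  moreover have "l1dist (mu_st p m y N mN c \<sigma>0) (mu0 m) < \<eta>"
    if \<delta>: "\<delta>0 \<le> \<delta> \<and> 0 < \<delta> \<and> \<delta> < 1" and br: "best_reply p m y N mN c u \<delta> \<sigma>0" for \<delta> \<sigma>0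
  proof (rule near)
    have "sender_strategy \<sigma>0" using br by (simp add: best_reply_def)
    then interpret sender_play p m y N mN c \<sigma>0 using st im yd by unfold_locales
    show "near_Mset m \<rho> (mu_st p m y N mN c \<sigma>0)" by (rule mu_st_near_Mset[OF N1 adm grid col])
    show "Upay u (mu0 m) y - Upay u (mu_st p m y N mN c \<sigma>0) y \<le> \<kappa>"
      using best \<delta> br truthful_strategy truthful by fastforce
  qed
  ultimately show ?thesis by blast
qed

theorem lemma2:
  fixes p :: "'s::finite \<Rightarrow> 's \<Rightarrow> real" and m :: "'s \<Rightarrow> real"
    and u1 u2 :: "'s \<Rightarrow> 'b::finite \<Rightarrow> real"
    and y0 ybar :: "'s \<Rightarrow> 'b \<Rightarrow> real" and \<epsilon> :: real
    and mN :: "nat \<Rightarrow> 's \<Rightarrow> real" and c :: "nat \<Rightarrow> 's list \<Rightarrow> 's list"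
  assumes chain: "stochastic p" "irreducible_chain p" "aperiodic_chain p" "invariant_measure p m"
    and y0: "cond_distr y0" "\<forall>\<mu>\<in>Mset m - {mu0 m}. Upay u1 (mu0 m) y0 > Upay u1 \<mu> y0"
      "Upay u2 (mu0 m) y0 > v2 m u2"
    and ybar: "cond_distr ybar" "\<forall>\<mu>\<in>Mset m. Upay u1 (mu0 m) ybar \<ge> Upay u1 \<mu> ybar"
      "Upay u2 (mu0 m) ybar \<ge> v2 m u2"
    and eps: "0 < \<epsilon>" "\<epsilon> \<le> 1"
    and mN: "\<forall>N\<ge>1. closest_grid N m (mN N)"
    and c: "\<forall>N\<ge>1. admissible_completion N (mN N) (c N)"
  shows "\<forall>\<eta>>0. \<exists>N0. \<forall>N\<ge>N0. \<exists>\<delta>0<1. \<forall>\<delta>. \<delta>0 \<le> \<delta> \<and> 0 < \<delta> \<and> \<delta> < 1 \<longrightarrow>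
     (\<forall>\<sigma>0. pure_strategy \<sigma>0 \<and>
        best_reply p m (\<lambda>a b. \<epsilon> * y0 a b + (1 - \<epsilon>) * ybar a b) N (mN N) (c N) u1 \<delta> \<sigma>0 \<longrightarrow>
        l1dist (mu_st p m (\<lambda>a b. \<epsilon> * y0 a b + (1 - \<epsilon>) * ybar a b) N (mN N) (c N) \<sigma>0) (mu0 m) < \<eta>)"
proof (intro allI impI)
  fix \<eta> :: real assume \<eta>: "0 < \<eta>"
  define y where "y = (\<lambda>a b. \<epsilon> * y0 a b + (1 - \<epsilon>) * ybar a b)"
  have yd: "cond_distr y" unfolding y_def using y0(1) ybar(1) eps by (intro cond_distr_mix) auto
  have strict: "\<forall>\<mu>\<in>Mset m - {mu0 m}. Upay u1 \<mu> y < Upay u1 (mu0 m) y"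
    unfolding y_def using mixture_strictly_optimal[OF _ _ eps] y0(2) ybar(2) by blast
  obtain \<rho> \<kappa> where \<rho>: "0 < \<rho>" and \<kappa>: "0 < \<kappa>" and near: "\<And>\<mu>. near_Mset m \<rho> \<mu> \<Longrightarrow>
      Upay u1 (mu0 m) y - Upay u1 \<mu> y \<le> \<kappa> \<Longrightarrow> l1dist \<mu> (mu0 m) < \<eta>"
    using near_optimal_imp_near_mu0[OF strict _ \<eta>] chain(4) by (auto simp: invariant_measure_def)
  obtain N\<^sub>T where truthful: "\<And>N. N\<^sub>T \<le> N \<Longrightarrow>
      Upay u1 (mu0 m) y - Upay u1 (mu_st p m y N (mN N) (c N) truthful) y \<le> \<kappa> / 2"
    using truthful_nearly_optimal[OF chain(1,2,4) yd _ mN c, of "\<kappa> / 2"] \<kappa> by auto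
  have "\<exists>\<delta>0<1. \<forall>\<delta>. \<delta>0 \<le> \<delta> \<and> 0 < \<delta> \<and> \<delta> < 1 \<longrightarrow>
      (\<forall>\<sigma>0. best_reply p m y N (mN N) (c N) u1 \<delta> \<sigma>0 \<longrightarrow> l1dist (mu_st p m y N (mN N) (c N) \<sigma>0) (mu0 m) < \<eta>)"
    if N: "max N\<^sub>T (nat \<lceil>2 * real CARD('s) / \<rho>\<rceil> + 1) \<le> N" for N
  proof (rule best_reply_frequency_near_mu0[OF chain(1,4) yd _ _ _ _ \<kappa> near truthful])
    show N1: "1 \<le> N" and "N\<^sub>T \<le> N" using N by auto
    then show "admissible_completion N (mN N) (c N)" "closest_grid N m (mN N)" using c mN by auto
    have "2 * real CARD('s) / \<rho> \<le> real N" using N by linarith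
    then show "2 * real CARD('s) / real N \<le> \<rho>" using \<rho> N1 by (simp add: field_simps)
  qed
  then show "\<exists>N0. \<forall>N\<ge>N0. \<exists>\<delta>0<1. \<forall>\<delta>. \<delta>0 \<le> \<delta> \<and> 0 < \<delta> \<and> \<delta> < 1 \<longrightarrow> (\<forall>\<sigma>0. pure_strategy \<sigma>0 \<and>
      best_reply p m (\<lambda>a b. \<epsilon> * y0 a b + (1 - \<epsilon>) * ybar a b) N (mN N) (c N) u1 \<delta> \<sigma>0 \<longrightarrow>
      l1dist (mu_st p m (\<lambda>a b. \<epsilon> * y0 a b + (1 - \<epsilon>) * ybar a b) N (mN N) (c N) \<sigma>0) (mu0 m) < \<eta>)"
    unfolding y_def[symmetric] by blast
qed

end
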